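(* In the setting described in the context, assume in addition that $(A,B)$ is controllable and let $\mathcal{X}_N=\{x\in\mathbb{R}^n:\ \exists\,U=(u_0,\dots,u_{N-1})\in\mathbb{R}^{Nm}$ with $u_k\in\mathcal{U}$ for $k=0,\dots,N-1$, $x_k(U,x)\in\mathcal{X}$ for $k=0,\dots,N-1$, and $x_N(U,x)=0\}$, where $x_k(U,x)=A^kx+\sum_{i=0}^{k-1}A^iBu_{k-1-i}$. Then for every compact set $\mathcal{X}_0\subseteq\mathcal{X}_N^\circ$ (interior of $\mathcal{X}_N$) and every $\hat{z}_{\mathrm{x,tol}}\in\mathbb{R}^{q_{\mathrm{x}}}$, $\hat{z}_{\mathrm{u,tol}}\in\mathbb{R}^{q_{\mathrm{u}}}$ with nonnegative entries, there exist $\bar{\delta}_0>0$ and $\mu\in\mathcal{K}_\infty$ such that for every relaxation parameter $0<\delta\le\bar{\delta}_0$, every $x_0\in\mathcal{X}_0$, every initialization $U_0$ with $\|U_0-\hat{U}^*(x_0)\|\le\mu(\delta)$, every sequence $\boldsymbol{i}_{\mathrm{T}}=\{i_{\mathrm{T}}(0),i_{\mathrm{T}}(1),\dots\}$ of nonnegative integers, and every $k\in\mathbb{N}$, the closed-loop trajectories (constructed with this $\delta$) with $u(k)=\Pi_0U(k)$ satisfy $C_{\mathrm{x}}x(k)\le d_{\mathrm{x}}+\hat{z}_{\mathrm{x,tol}}$ and $C_{\mathrm{u}}u(k)\le d_{\mathrm{u}}+\hat{z}_{\mathrm{u,tol}}$.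
   Context: Let $n,m,N\in\mathbb{N}_+$, $A\in\mathbb{R}^{n\times n}$, $B\in\mathbb{R}^{n\times m}$. Let $\mathcal{X}=\{x\in\mathbb{R}^n: C_{\mathrm{x}}x\le d_{\mathrm{x}}\}$ and $\mathcal{U}=\{u\in\mathbb{R}^m: C_{\mathrm{u}}u\le d_{\mathrm{u}}\}$ be compact polytopes, with $C_{\mathrm{x}}\in\mathbb{R}^{q_{\mathrm{x}}\times n}$, $C_{\mathrm{u}}\in\mathbb{R}^{q_{\mathrm{u}}\times m}$ and $d_{\mathrm{x}},d_{\mathrm{u}}$ having all entries strictly positive; superscript $i$ denotes the $i$-th row/entry, $\mathds{1}$ is the all-ones vector. Fix $\varepsilon>0$, $Q\succeq0$, $R\succ0$ (symmetric), and weight vectors $w_{\mathrm{x}},w_{\mathrm{u}}$ with nonnegative entries satisfying $C_{\mathrm{x}}^\top\mathrm{diag}(1/d_{\mathrm{x}}^1,\dots,1/d_{\mathrm{x}}^{q_{\mathrm{x}}})(\mathds{1}+w_{\mathrm{x}})=0$ and $C_{\mathrm{u}}^\top\mathrm{diag}(1/d_{\mathrm{u}}^1,\dots,1/d_{\mathrm{u}}^{q_{\mathrm{u}}})(\mathds{1}+w_{\mathrm{u}})=0$. For a relaxation parameter $\delta$ with $0<\delta\le$ the smallest entry of $d_{\mathrm{x}}$ and $d_{\mathrm{u}}$, all of the following objects depend on $\delta$. Relaxed barrier: $\hat{B}(z)=-\ln z$ for $z>\delta$, $\hat{B}(z)=\tfrac12[((z-2\delta)/\delta)^2-1]-\ln\delta$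 for $z\le\delta$. Recentered barriers: $\hat{B}_{\mathrm{x}}(x)=\sum_{i=1}^{q_{\mathrm{x}}}(1+w_{\mathrm{x}}^i)(\hat{B}(-C_{\mathrm{x}}^ix+d_{\mathrm{x}}^i)+\ln d_{\mathrm{x}}^i)$, $\hat{B}_{\mathrm{u}}(u)=\sum_{j=1}^{q_{\mathrm{u}}}(1+w_{\mathrm{u}}^j)(\hat{B}(-C_{\mathrm{u}}^ju+d_{\mathrm{u}}^j)+\ln d_{\mathrm{u}}^j)$. Stage cost $\hat{\ell}(x,u)=x^\top Qx+u^\top Ru+\varepsilon\hat{B}_{\mathrm{x}}(x)+\varepsilon\hat{B}_{\mathrm{u}}(u)$. With $M_{\mathrm{x}}=\frac{1}{2\delta^2}C_{\mathrm{x}}^\top\mathrm{diag}(\mathds{1}+w_{\mathrm{x}})C_{\mathrm{x}}$, $M_{\mathrm{u}}=\frac{1}{2\delta^2}C_{\mathrm{u}}^\top\mathrm{diag}(\mathds{1}+w_{\mathrm{u}})C_{\mathrm{u}}$, let $P\succ0$ solve $K=-(R+B^\top PB+\varepsilon M_{\mathrm{u}})^{-1}B^\top PA$, $P=(A+BK)^\top P(A+BK)+K^\top(R+\varepsilon M_{\mathrm{u}})K+Q+\varepsilon M_{\mathrm{x}}$. For $U=(u_0,\dots,u_{N-1})\in\mathbb{R}^{Nm}$, $x\in\mathbb{R}^n$, let $x_0=x$, $x_{k+1}=Ax_k+Bu_k$ and $\hat{J}_N(U,x)=\sum_{k=0}^{N-1}\hat{\ell}(x_k,u_k)+x_N^\top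 Px_N$; $\hat{U}^*(x)=\arg\min_U\hat{J}_N(U,x)$ (unique minimizer). Let $\Pi_0=[I_m\ 0\ \cdots\ 0]$ (so $\Pi_0U=u_0$). Let $k_f:\mathbb{R}^{Nm}\times\mathbb{R}^n\to\mathbb{R}^m$ be a function with $k_f(0,0)=0$ such that for all $(U,x)$, with $x^+=Ax+Bu_0$ and $U^+=(u_1,\dots,u_{N-1},k_f(U,x))$, $\hat{J}_N(U^+,x^+)-\hat{J}_N(U,x)\le-\hat{\ell}(x,u_0)$. Shift operator: $\Psi_{\mathrm{s}}(U,x)=(u_1,\dots,u_{N-1},k_f(U,x))$. Optimizer update operator: any $\Psi_{\mathrm{o}}$ with $\hat{J}_N(\Psi_{\mathrm{o}}(U,x),x)-\hat{J}_N(U,x)\le-\gamma(U,x)$ for all $(U,x)$, where $\gamma\ge0$ and $\gamma(U,x)=0\iff\nabla_U\hat{J}_N(U,x)=0$. Define $\Phi^0(U,x)=\Psi_{\mathrm{s}}(U,x)$, $\Phi^i(U,x)=\Psi_{\mathrm{o}}(\Phi^{i-1}(U,x),Ax+B\Pi_0U)$ for $i\ge1$. Closed loop: $x(k+1)=Ax(k)+B\Pi_0U(k)$, $U(k+1)=\Phi^{i_{\mathrm{T}}(k)}(U(k),x(k))$, $x(0)=x_0$, $U(0)=U_0$. A function $\mu:\mathbb{R}_+\to\mathbb{R}_+$ is in $\mathcal{K}_\infty$ if continuous, strictly increasing, $\mu(0)=0$, and unbounded. *)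

theory Defs
  imports "HOL-Analysis.Analysis"
begin

(* An input sequence U = (u_0,...,u_{N-1}) in R^{Nm} is represented as a function
   nat => real^'m that vanishes for indices >= N. *)

definition seqs :: "nat \<Rightarrow> (nat \<Rightarrow> real^'m) set" where
  "seqs N = {U. \<forall>k\<ge>N. U k = 0}"

definition seq_norm :: "nat \<Rightarrow> (nat \<Rightarrow> real^'m) \<Rightarrow> real" where
  "seq_norm N U = sqrt (\<Sum>k<N. (norm (U k))\<^sup>2)"

fun matpow :: "real^'n^'n \<Rightarrow> nat \<Rightarrow> real^'n^'n" where
  "matpow A 0 = mat 1"
| "matpow A (Suc k) = A ** matpow A k"

definition diagm :: "real^'q \<Rightarrow> real^'q^'q" where
  "diagm v = (\<chi> i j. if i = j then v $ i else 0)"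

definition polyh :: "real^'n^'q \<Rightarrow> real^'q \<Rightarrow> (real^'n) set" where
  "polyh C d = {x. \<forall>i. (C *v x) $ i \<le> d $ i}"

definition psd :: "real^'n^'n \<Rightarrow> bool" where
  "psd M \<longleftrightarrow> transpose M = M \<and> (\<forall>x. 0 \<le> x \<bullet> (M *v x))"

definition pd :: "real^'n^'n \<Rightarrow> bool" where
  "pd M \<longleftrightarrow> transpose M = M \<and> (\<forall>x. x \<noteq> 0 \<longrightarrow> 0 < x \<bullet> (M *v x))"

(* rank [B AB ... A^(n-1)B] = n : the columns of the controllability matrix span R^n *)
definition controllable :: "real^'n^'n \<Rightarrow> real^'m^'n \<Rightarrow> bool" where
  "controllable A B \<longleftrightarrow>
     span (\<Union>k\<in>{..<CARD('n)}. range (\<lambda>u. (matpow A k ** B) *v u)) = UNIV"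

definition Kinf :: "(real \<Rightarrow> real) \<Rightarrow> bool" where
  "Kinf \<mu> \<longleftrightarrow> continuous_on {0..} \<mu> \<and> strict_mono_on {0..} \<mu> \<and> \<mu> 0 = 0
     \<and> (\<forall>x\<ge>0. \<mu> x \<ge> 0) \<and> filterlim \<mu> at_top at_top"

fun traj :: "real^'n^'n \<Rightarrow> real^'m^'n \<Rightarrow> (nat \<Rightarrow> real^'m) \<Rightarrow> real^'n \<Rightarrow> nat \<Rightarrow> real^'n" where
  "traj A B U x 0 = x"
| "traj A B U x (Suc k) = A *v traj A B U x k + B *v U k"

definition feasible_set ::
  "real^'n^'n \<Rightarrow> real^'m^'n \<Rightarrow> real^'n^'qx \<Rightarrow> real^'qx \<Rightarrow> real^'m^'qu \<Rightarrow> real^'qu \<Rightarrow> nat \<Rightarrow> (real^'n) set" where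
  "feasible_set A B Cx dx Cu du N = {x. \<exists>U.
      (\<forall>k<N. U k \<in> polyh Cu du) \<and> (\<forall>k<N. traj A B U x k \<in> polyh Cx dx) \<and> traj A B U x N = 0}"

definition relbar :: "real \<Rightarrow> real \<Rightarrow> real" where
  "relbar \<delta> z = (if z > \<delta> then - ln z else ((z - 2*\<delta>)/\<delta>)\<^sup>2 / 2 - 1/2 - ln \<delta>)"

definition recbar :: "real \<Rightarrow> real^'n^'q \<Rightarrow> real^'q \<Rightarrow> real^'q \<Rightarrow> real^'n \<Rightarrow> real" where
  "recbar \<delta> C d w y = (\<Sum>i\<in>UNIV. (1 + w $ i) * (relbar \<delta> (d $ i - (C *v y) $ i) + ln (d $ i)))"

definition stage_cost ::
  "real \<Rightarrow> real \<Rightarrow> real^'n^'n \<Rightarrow> real^'m^'m \<Rightarrow> real^'n^'qx \<Rightarrow> real^'qx \<Rightarrow> real^'qx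
   \<Rightarrow> real^'m^'qu \<Rightarrow> real^'qu \<Rightarrow> real^'qu \<Rightarrow> real^'n \<Rightarrow> real^'m \<Rightarrow> real" where
  "stage_cost \<delta> \<epsilon> Q R Cx dx wx Cu du wu x u =
     x \<bullet> (Q *v x) + u \<bullet> (R *v u) + \<epsilon> * recbar \<delta> Cx dx wx x + \<epsilon> * recbar \<delta> Cu du wu u"

definition Mmat :: "real \<Rightarrow> real^'n^'q \<Rightarrow> real^'q \<Rightarrow> real^'n^'n" where
  "Mmat \<delta> C w = (1 / (2 * \<delta>\<^sup>2)) *\<^sub>R (transpose C ** diagm (\<chi> i. 1 + w $ i) ** C)"

definition gainK ::
  "real^'n^'n \<Rightarrow> real^'m^'n \<Rightarrow> real^'m^'m \<Rightarrow> real \<Rightarrow> real^'m^'m \<Rightarrow> real^'n^'n \<Rightarrow> real^'n^'m" where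
  "gainK A B R \<epsilon> Mu P = - (matrix_inv (R + transpose B ** P ** B + \<epsilon> *\<^sub>R Mu) ** (transpose B ** P ** A))"

definition cost_N ::
  "real^'n^'n \<Rightarrow> real^'m^'n \<Rightarrow> nat \<Rightarrow> (real^'n \<Rightarrow> real^'m \<Rightarrow> real) \<Rightarrow> real^'n^'n
   \<Rightarrow> (nat \<Rightarrow> real^'m) \<Rightarrow> real^'n \<Rightarrow> real" where
  "cost_N A B N l P U x =
     (\<Sum>k<N. l (traj A B U x k) (U k)) + traj A B U x N \<bullet> (P *v traj A B U x N)"

definition grad_zero :: "nat \<Rightarrow> ((nat \<Rightarrow> real^'m) \<Rightarrow> real) \<Rightarrow> (nat \<Rightarrow> real^'m) \<Rightarrow> bool" where
  "grad_zero N J U \<longleftrightarrow> (\<forall>k<N. ((\<lambda>v. J (U(k := v))) has_derivative (\<lambda>_. 0)) (at (U k)))"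

definition shiftop :: "nat \<Rightarrow> ((nat \<Rightarrow> real^'m) \<Rightarrow> real^'n \<Rightarrow> real^'m) \<Rightarrow> (nat \<Rightarrow> real^'m) \<Rightarrow> real^'n \<Rightarrow> (nat \<Rightarrow> real^'m)" where
  "shiftop N kf U x = (\<lambda>k. if k + 1 < N then U (k + 1) else if k + 1 = N then kf U x else 0)"

fun Phi :: "real^'n^'n \<Rightarrow> real^'m^'n \<Rightarrow> nat \<Rightarrow> ((nat \<Rightarrow> real^'m) \<Rightarrow> real^'n \<Rightarrow> real^'m)
   \<Rightarrow> ((nat \<Rightarrow> real^'m) \<Rightarrow> real^'n \<Rightarrow> (nat \<Rightarrow> real^'m)) \<Rightarrow> nat \<Rightarrow> (nat \<Rightarrow> real^'m) \<Rightarrow> real^'n \<Rightarrow> (nat \<Rightarrow> real^'m)" where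
  "Phi A B N kf Psio 0 U x = shiftop N kf U x"
| "Phi A B N kf Psio (Suc i) U x = Psio (Phi A B N kf Psio i U x) (A *v x + B *v U 0)"

fun closed_loop :: "real^'n^'n \<Rightarrow> real^'m^'n \<Rightarrow> nat \<Rightarrow> ((nat \<Rightarrow> real^'m) \<Rightarrow> real^'n \<Rightarrow> real^'m)
   \<Rightarrow> ((nat \<Rightarrow> real^'m) \<Rightarrow> real^'n \<Rightarrow> (nat \<Rightarrow> real^'m)) \<Rightarrow> (nat \<Rightarrow> nat) \<Rightarrow> real^'n \<Rightarrow> (nat \<Rightarrow> real^'m)
   \<Rightarrow> nat \<Rightarrow> (real^'n) \<times> (nat \<Rightarrow> real^'m)" where
  "closed_loop A B N kf Psio iT x0 U0 0 = (x0, U0)"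
| "closed_loop A B N kf Psio iT x0 U0 (Suc k) =
     (let (x, U) = closed_loop A B N kf Psio iT x0 U0 k
      in (A *v x + B *v U 0, Phi A B N kf Psio (iT k) U x))"

end

theory Submission
  imports Defs
begin

text \<open>The closed loop is a descent method for the relaxed cost \<open>J\<^sub>\<delta>\<close>: the shift with the terminal
  control law and every optimizer update can only decrease it. Hence \<open>J\<^sub>\<delta>\<close> stays below its initial
  value, which exceeds the optimal cost by at most \<open>c \<parallel>U\<^sub>0 - U\<^sup>*\<parallel>\<^sup>2 / \<delta>\<^sup>2\<close>: the relaxed barrier has
  curvature \<open>1/\<delta>\<^sup>2\<close>, and so, by the Riccati equation and steering from an interior point of \<open>\<X>\<^sub>N\<close>,
  does the terminal weight \<open>P\<close>. The optimal cost itself is bounded uniformly in \<open>\<delta>\<close> on compact subsets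
  of the interior of \<open>\<X>\<^sub>N\<close>, because a slightly scaled-up initial state admits inputs keeping all
  constraints a fixed distance inside the polytopes. So for \<open>\<parallel>U\<^sub>0 - U\<^sup>*\<parallel> \<le> \<delta>/(1 + c)\<close> the cost along
  the closed loop stays below a bound \<open>\<beta> + 1\<close> independent of \<open>\<delta>\<close>. On the other hand the recentered
  barrier is nonnegative and exceeds \<open>ln (d\<^sub>i/\<delta>)\<close> as soon as constraint \<open>i\<close> is violated, so once
  \<open>\<delta> \<le> d\<^sub>i exp (- (\<beta> + 1)/\<epsilon>)\<close> no constraint is violated along the closed loop, not even by a
  tolerance of zero.\<close>

section \<open>The relaxed logarithmic barrier\<close>

definition relbar_quad :: "real \<Rightarrow> real \<Rightarrow> real" where
  "relbar_quad \<delta> z = ((z - 2*\<delta>)/\<delta>)\<^sup>2 / 2 - 1/2 - ln \<delta>"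

text \<open>The derivative of the \<open>C\<^sup>1\<close> function \<open>relbar \<delta>\<close>.\<close>
definition relbar_slope :: "real \<Rightarrow> real \<Rightarrow> real" where
  "relbar_slope \<delta> m = (if m > \<delta> then - 1/m else (m - 2*\<delta>)/\<delta>\<^sup>2)"

lemma relbar_eq_quad: "relbar \<delta> z = (if z > \<delta> then - ln z else relbar_quad \<delta> z)"
  by (simp add: relbar_def relbar_quad_def)

lemma relbar_quad_expand:
  fixes z m \<delta> :: real assumes "\<delta> > 0"
  shows "relbar_quad \<delta> z = relbar_quad \<delta> m + (m - 2*\<delta>)/\<delta>\<^sup>2 * (z - m) + (z - m)\<^sup>2/(2*\<delta>\<^sup>2)"
  using assms unfolding relbar_quad_def by (simp add: field_simps power2_eq_square)

lemma relbar_quad_at_delta: "\<delta> > 0 \<Longrightarrow> relbar_quad \<delta> \<delta> = - ln \<delta>"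
  unfolding relbar_quad_def by (simp add: field_simps power2_eq_square)

lemma relbar_quad_expand_at_delta:
  fixes z \<delta> :: real assumes "\<delta> > 0"
  shows "relbar_quad \<delta> z = - ln \<delta> - (z - \<delta>)/\<delta> + (z - \<delta>)\<^sup>2/(2*\<delta>\<^sup>2)"
  using relbar_quad_expand[OF assms, of z \<delta>] relbar_quad_at_delta[OF assms] assms
  by (simp add: field_simps power2_eq_square)

lemma ln_ge_tangent_minus_sq:
  fixes z m \<delta> :: real assumes "\<delta> \<le> z" "\<delta> \<le> m" "\<delta> > 0"
  shows "ln m + (z - m)/m - (z - m)\<^sup>2/\<delta>\<^sup>2 \<le> ln z"
proof -
  have "ln m - ln z \<le> (m - z)/z" using assms by (intro ln_diff_le) auto
  moreover have "(z - m)/m - (z - m)/z = (z - m)\<^sup>2/(m*z)"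
    using assms by (simp add: field_simps power2_eq_square)
  moreover have "(z - m)\<^sup>2/(m*z) \<le> (z - m)\<^sup>2/\<delta>\<^sup>2"
    using assms by (intro divide_left_mono) (auto simp: power2_eq_square mult_mono)
  moreover have "(m - z)/z = - ((z - m)/z)" by (simp add: minus_divide_left)
  ultimately show ?thesis by linarith
qed

lemma relbar_quad_tangent_le_neg_ln:
  fixes \<delta> z m :: real assumes d: "\<delta> > 0" and "\<delta> < z" "m \<le> \<delta>"
  shows "relbar_quad \<delta> m + (m - 2*\<delta>)/\<delta>\<^sup>2 * (z - m) \<le> - ln z"
proof -
  have l: "ln z - ln \<delta> \<le> (z - \<delta>)/\<delta>" using assms by (intro ln_diff_le) auto
  have "(m - 2*\<delta>)/\<delta>\<^sup>2 \<le> - 1/\<delta>"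
    using assms by (simp add: field_simps power2_eq_square)
  then have "(m - 2*\<delta>)/\<delta>\<^sup>2 * (z - \<delta>) \<le> - 1/\<delta> * (z - \<delta>)"
    using assms by (intro mult_right_mono) auto
  moreover have "(m - 2*\<delta>)/\<delta>\<^sup>2 * (z - m) = (m - 2*\<delta>)/\<delta>\<^sup>2 * (\<delta> - m) + (m - 2*\<delta>)/\<delta>\<^sup>2 * (z - \<delta>)"
    by (subst distrib_left[symmetric]) simp
  moreover have "0 \<le> (\<delta> - m)\<^sup>2/(2*\<delta>\<^sup>2)" by simp
  moreover have "- 1/\<delta> * (z - \<delta>) = - ((z - \<delta>)/\<delta>)" by simp
  ultimately show ?thesis
    using l relbar_quad_expand[OF d, of \<delta> m] relbar_quad_at_delta[OF d] by linarith
qed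

lemma neg_ln_tangent_le_relbar_quad:
  fixes \<delta> z m :: real assumes d: "\<delta> > 0" and "z \<le> \<delta>" "\<delta> < m"
  shows "- ln m - (z - m)/m \<le> relbar_quad \<delta> z"
proof -
  have l: "ln \<delta> - ln m \<le> (\<delta> - m)/m" using assms by (intro ln_diff_le) auto
  have "z * (1/\<delta> - 1/m) \<le> \<delta> * (1/\<delta> - 1/m)"
    using assms by (intro mult_right_mono) (auto simp: field_simps)
  moreover have "\<delta> * (1/\<delta> - 1/m) = - ((\<delta> - m)/m)" using assms by (simp add: field_simps)
  moreover have "- ((z - \<delta>)/\<delta>) + (z - m)/m = - (z * (1/\<delta> - 1/m))" using assms by (simp add: field_simps)
  moreover have "(z - \<delta>)\<^sup>2/(2*\<delta>\<^sup>2) \<ge> 0" by simp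
  ultimately show ?thesis using l relbar_quad_expand_at_delta[OF d, of z] by linarith
qed

lemma relbar_ge_tangent:
  fixes \<delta> z m :: real assumes d: "\<delta> > 0"
  shows "relbar \<delta> m + relbar_slope \<delta> m * (z - m) \<le> relbar \<delta> z"
proof -
  consider "\<delta> < z" "\<delta> < m" | "\<delta> < z" "m \<le> \<delta>" | "z \<le> \<delta>" "\<delta> < m" | "z \<le> \<delta>" "m \<le> \<delta>" by linarith
  then show ?thesis
  proof cases
    case 1
    then have "ln z - ln m \<le> (z - m)/m" using d by (intro ln_diff_le) auto
    then show ?thesis using 1 by (simp add: relbar_eq_quad relbar_slope_def)
  next
    case 2
    then show ?thesis using relbar_quad_tangent_le_neg_ln[OF d 2] by (simp add: relbar_eq_quad relbar_slope_def)
  next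
    case 3
    then show ?thesis using neg_ln_tangent_le_relbar_quad[OF d 3] by (simp add: relbar_eq_quad relbar_slope_def)
  next
    case 4
    then show ?thesis using relbar_quad_expand[OF d, of z m] by (simp add: relbar_eq_quad relbar_slope_def)
  qed
qed

lemma neg_ln_le_relbar_quad_tangent_plus_sq:
  fixes \<delta> z m :: real assumes d: "\<delta> > 0" and "\<delta> < z" "m \<le> \<delta>"
  shows "- ln z \<le> relbar_quad \<delta> m + (m - 2*\<delta>)/\<delta>\<^sup>2 * (z - m) + (z - m)\<^sup>2/\<delta>\<^sup>2"
proof -
  have l: "ln \<delta> + (z - \<delta>)/\<delta> - (z - \<delta>)\<^sup>2/\<delta>\<^sup>2 \<le> ln z" using assms by (intro ln_ge_tangent_minus_sq) auto
  have "(z - \<delta>)\<^sup>2 \<le> (z - m)\<^sup>2" using assms by (intro power_mono) auto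
  then have "(z - \<delta>)\<^sup>2/\<delta>\<^sup>2 - (z - \<delta>)\<^sup>2/(2*\<delta>\<^sup>2) \<le> (z - m)\<^sup>2/\<delta>\<^sup>2 - (z - m)\<^sup>2/(2*\<delta>\<^sup>2)"
    using d by (simp add: field_simps)
  then show ?thesis
    using l relbar_quad_expand[OF d, of z m] relbar_quad_expand_at_delta[OF d, of z] by linarith
qed

lemma relbar_quad_le_neg_ln_tangent_plus_sq:
  fixes \<delta> z m :: real assumes d: "\<delta> > 0" and "z \<le> \<delta>" "\<delta> < m"
  shows "relbar_quad \<delta> z \<le> - ln m - (z - m)/m + (z - m)\<^sup>2/\<delta>\<^sup>2"
proof -
  have l: "ln m + (\<delta> - m)/m - (\<delta> - m)\<^sup>2/\<delta>\<^sup>2 \<le> ln \<delta>"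
    using assms by (intro ln_ge_tangent_minus_sq) auto
  define a where "a = m - \<delta>"
  define b where "b = \<delta> - z"
  have a: "a > 0" and b: "b \<ge> 0" using assms by (auto simp: a_def b_def)
  have "a*b/(m*\<delta>) \<le> a*b/\<delta>\<^sup>2"
    using a b assms by (intro divide_left_mono) (auto simp: power2_eq_square intro: mult_mono)
  moreover have "- (z - \<delta>)/\<delta> + (z - m)/m - (\<delta> - m)/m = a*b/(m*\<delta>)"
    using assms by (simp add: a_def b_def field_simps)
  moreover have "(z - m)\<^sup>2/\<delta>\<^sup>2 - (\<delta> - m)\<^sup>2/\<delta>\<^sup>2 - (z - \<delta>)\<^sup>2/(2*\<delta>\<^sup>2) = (2*a*b + b\<^sup>2/2)/\<delta>\<^sup>2"
    using d by (simp add: a_def b_def field_simps power2_eq_square)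
  moreover have "a*b/\<delta>\<^sup>2 \<le> (2*a*b + b\<^sup>2/2)/\<delta>\<^sup>2"
    using a b d by (intro divide_right_mono) (auto simp: power2_eq_square)
  ultimately show ?thesis using relbar_quad_expand_at_delta[OF d, of z] l by linarith
qed

lemma relbar_le_tangent_plus_sq:
  fixes \<delta> z m :: real assumes d: "\<delta> > 0"
  shows "relbar \<delta> z \<le> relbar \<delta> m + relbar_slope \<delta> m * (z - m) + (z - m)\<^sup>2/\<delta>\<^sup>2"
proof -
  consider "\<delta> < z" "\<delta> < m" | "\<delta> < z" "m \<le> \<delta>" | "z \<le> \<delta>" "\<delta> < m" | "z \<le> \<delta>" "m \<le> \<delta>" by linarith
  then show ?thesis
  proof cases
    case 1
    then have "ln m + (z - m)/m - (z - m)\<^sup>2/\<delta>\<^sup>2 \<le> ln z" using d by (intro ln_ge_tangent_minus_sq) auto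
    then show ?thesis using 1 by (simp add: relbar_eq_quad relbar_slope_def)
  next
    case 2
    then show ?thesis
      using neg_ln_le_relbar_quad_tangent_plus_sq[OF d 2] by (simp add: relbar_eq_quad relbar_slope_def)
  next
    case 3
    then show ?thesis
      using relbar_quad_le_neg_ln_tangent_plus_sq[OF d 3] by (simp add: relbar_eq_quad relbar_slope_def)
  next
    case 4
    have "(z - m)\<^sup>2/(2*\<delta>\<^sup>2) \<le> (z - m)\<^sup>2/\<delta>\<^sup>2" using d by (simp add: field_simps)
    then show ?thesis using 4 relbar_quad_expand[OF d, of z m] by (simp add: relbar_eq_quad relbar_slope_def)
  qed
qed

lemma relbar_slope_nonpos: "\<delta> > 0 \<Longrightarrow> relbar_slope \<delta> m \<le> 0"
  by (auto simp: relbar_slope_def divide_nonpos_pos)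

lemma relbar_antimono:
  fixes \<delta> z m :: real assumes "\<delta> > 0" "z \<le> m"
  shows "relbar \<delta> m \<le> relbar \<delta> z"
proof -
  have "0 \<le> relbar_slope \<delta> m * (z - m)"
    using relbar_slope_nonpos[OF assms(1)] assms(2) by (simp add: mult_nonpos_nonpos)
  then show ?thesis using relbar_ge_tangent[OF assms(1), of m z] by linarith
qed

lemma relbar_eq_neg_ln:
  fixes \<delta> d :: real assumes "\<delta> > 0" "\<delta> \<le> d"
  shows "relbar \<delta> d = - ln d" and "relbar_slope \<delta> d = - 1/d"
  using assms relbar_quad_at_delta[OF assms(1)]
  by (auto simp: relbar_eq_quad relbar_slope_def field_simps power2_eq_square)

lemma relbar_nonpos_ge:
  fixes \<delta> d z :: real assumes "\<delta> > 0" "\<delta> \<le> d" "z \<le> 0"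
  shows "3/2 - ln \<delta> \<le> relbar \<delta> z + z/d"
proof -
  have e: "relbar \<delta> z = z\<^sup>2/(2*\<delta>\<^sup>2) - 2*z/\<delta> + 3/2 - ln \<delta>"
    using assms by (simp add: relbar_def field_simps power2_eq_square)
  have "1/d \<le> 2/\<delta>" using assms by (simp add: field_simps)
  then have "0 \<le> z * (1/d - 2/\<delta>)" using assms(3) by (intro mult_nonpos_nonpos) auto
  moreover have "z * (1/d - 2/\<delta>) = z/d - 2*z/\<delta>" by (simp add: algebra_simps)
  moreover have "0 \<le> z\<^sup>2/(2*\<delta>\<^sup>2)" by simp
  ultimately show ?thesis using e by linarith
qed

lemma relbar_second_difference:
  fixes \<delta> m h :: real assumes "\<delta> > 0"
  shows "relbar \<delta> (m + h) + relbar \<delta> (m - h) \<le> 2 * relbar \<delta> m + 2 * h\<^sup>2/\<delta>\<^sup>2"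
  using relbar_le_tangent_plus_sq[OF assms, of "m + h" m] relbar_le_tangent_plus_sq[OF assms, of "m - h" m]
  by simp

lemma relbar_midpoint:
  fixes \<delta> a b :: real assumes "\<delta> > 0"
  shows "relbar \<delta> ((a + b)/2) \<le> (relbar \<delta> a + relbar \<delta> b)/2"
proof -
  define m where "m = (a + b)/2"
  define t where "t = (a - b)/2"
  have "a = m + t" and "b = m - t" by (auto simp: m_def t_def field_simps)
  then have "relbar \<delta> m + relbar_slope \<delta> m * t \<le> relbar \<delta> a"
    and "relbar \<delta> m - relbar_slope \<delta> m * t \<le> relbar \<delta> b"
    using relbar_ge_tangent[OF assms, of m a] relbar_ge_tangent[OF assms, of m b] by simp_all
  then have "2 * relbar \<delta> m \<le> relbar \<delta> a + relbar \<delta> b" by linarith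
  then show ?thesis unfolding m_def[symmetric] by simp
qed

lemma continuous_on_relbar: "\<delta> > 0 \<Longrightarrow> continuous_on UNIV (relbar \<delta>)"
proof -
  assume d: "\<delta> > 0"
  have eq: "relbar \<delta> = (\<lambda>z. if z \<le> \<delta> then relbar_quad \<delta> z else - ln z)"
    by (auto simp: relbar_eq_quad fun_eq_iff)
  show ?thesis
    unfolding eq using d relbar_quad_at_delta[OF d] unfolding relbar_quad_def
    by (intro continuous_on_cases_le continuous_intros) auto
qed

definition quad_form :: "real^'n^'n \<Rightarrow> real^'n \<Rightarrow> real" where
  "quad_form M x = x \<bullet> (M *v x)"

lemma quad_form_parallelogram:
  "quad_form M (a + h) + quad_form M (a - h) = 2 * quad_form M a + 2 * quad_form M h"
  unfolding quad_form_def
  by (simp add: matrix_vector_right_distrib matrix_vector_mult_diff_distrib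
      inner_add_left inner_add_right inner_diff_left inner_diff_right)

lemma quad_form_midpoint:
  "quad_form M ((1/2) *\<^sub>R (a + b)) = (quad_form M a + quad_form M b)/2 - quad_form M (a - b)/4"
  unfolding quad_form_def
  by (simp add: matrix_vector_right_distrib matrix_vector_mult_diff_distrib matrix_vector_mult_scaleR
      inner_add_left inner_add_right inner_diff_left inner_diff_right field_simps)

lemma quad_form_scaleR: "quad_form M (c *\<^sub>R x) = c\<^sup>2 * quad_form M x"
  unfolding quad_form_def by (simp add: matrix_vector_mult_scaleR power2_eq_square)

lemma quad_form_add_matrix: "quad_form (M + M') x = quad_form M x + quad_form M' x"
  unfolding quad_form_def by (simp add: matrix_vector_mult_add_rdistrib inner_add_right)

lemma quad_form_scaleR_matrix: "quad_form (c *\<^sub>R M) x = c * quad_form M x"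
  unfolding quad_form_def by (simp add: scaleR_matrix_vector_assoc[symmetric])

lemma inner_matrix_transpose:
  fixes M :: "real^'n^'m" shows "x \<bullet> (transpose M *v y) = (M *v x) \<bullet> y"
  by (metis dot_lmul_matrix inner_commute transpose_matrix_vector)

lemma quad_form_transpose_mult: "quad_form (transpose M ** P ** M) x = quad_form P (M *v x)"
  unfolding quad_form_def by (simp only: matrix_vector_mul_assoc[symmetric] inner_matrix_transpose)

lemma quad_form_add_symmetric:
  assumes "transpose M = M"
  shows "quad_form M (a + b) = quad_form M a + 2 * (b \<bullet> (M *v a)) + quad_form M b"
proof -
  have "a \<bullet> (M *v b) = b \<bullet> (M *v a)" by (metis assms inner_matrix_transpose inner_commute)
  then show ?thesis unfolding quad_form_def
    by (simp add: matrix_vector_right_distrib inner_add_left inner_add_right)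
qed

lemma psd_quad_form_nonneg: "psd M \<Longrightarrow> 0 \<le> quad_form M x"
  unfolding psd_def quad_form_def by auto

lemma pd_quad_form_pos: "pd M \<Longrightarrow> x \<noteq> 0 \<Longrightarrow> 0 < quad_form M x"
  unfolding pd_def quad_form_def by auto

lemma pd_quad_form_nonneg: "pd M \<Longrightarrow> 0 \<le> quad_form M x"
  by (cases "x = 0") (auto simp: quad_form_def dest: pd_quad_form_pos)

lemma continuous_on_quad_form [continuous_intros]:
  "continuous_on S f \<Longrightarrow> continuous_on S (\<lambda>x. quad_form M (f x))"
  unfolding quad_form_def
  by (intro continuous_intros continuous_on_compose2[OF matrix_vector_mult_linear_continuous_on]) auto

lemma quad_form_le_norm:
  fixes M :: "real^'n^'n" obtains K where "K \<ge> 0" "\<And>x. \<bar>quad_form M x\<bar> \<le> K * (norm x)\<^sup>2"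
proof -
  obtain K where K: "K \<ge> 0" "\<And>x. norm (M *v x) \<le> norm x * K"
    using bounded_linear.nonneg_bounded[OF matrix_vector_mul_bounded_linear] by blast
  have "\<bar>quad_form M x\<bar> \<le> K * (norm x)\<^sup>2" for x
  proof -
    have "\<bar>quad_form M x\<bar> \<le> norm x * norm (M *v x)" unfolding quad_form_def by (rule Cauchy_Schwarz_ineq2)
    also have "\<dots> \<le> norm x * (norm x * K)" using K by (intro mult_left_mono) auto
    finally show ?thesis by (simp add: power2_eq_square algebra_simps)
  qed
  with K(1) show ?thesis by (rule that)
qed

lemma pd_quad_form_ge_norm:
  fixes R :: "real^'m^'m" assumes "pd R"
  obtains c where "c > 0" "\<And>u. c * (norm u)\<^sup>2 \<le> quad_form R u"
proof -
  have "sphere (0::real^'m) 1 \<noteq> {}"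
    using norm_axis_1 by (auto simp: sphere_def dist_norm intro!: exI[of _ "axis undefined 1"])
  moreover have "continuous_on (sphere 0 1) (\<lambda>u. quad_form R u)"
    by (intro continuous_intros)
  ultimately obtain u0 where u0: "u0 \<in> sphere 0 1" "\<And>v. v \<in> sphere 0 1 \<Longrightarrow> quad_form R u0 \<le> quad_form R v"
    using continuous_attains_inf[OF compact_sphere] by blast
  have "quad_form R u0 * (norm u)\<^sup>2 \<le> quad_form R u" for u
  proof (cases "u = 0")
    case False
    then have "quad_form R u0 \<le> quad_form R ((1/norm u) *\<^sub>R u)" by (intro u0(2)) simp
    also have "\<dots> = quad_form R u / (norm u)\<^sup>2" by (simp add: quad_form_scaleR power2_eq_square field_simps)
    finally show ?thesis using False by (simp add: field_simps)
  qed (simp add: quad_form_def)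
  moreover have "u0 \<noteq> 0" using u0(1) by auto
  then have "quad_form R u0 > 0" by (rule pd_quad_form_pos[OF assms])
  ultimately show ?thesis using that by blast
qed

lemma invertible_of_quad_form_pos:
  fixes G :: "real^'n^'n" assumes "\<And>y. y \<noteq> 0 \<Longrightarrow> 0 < quad_form G y"
  shows "invertible G"
proof -
  have "y = 0" if "G *v y = 0" for y
    using assms[of y] that by (auto simp: quad_form_def)
  then show ?thesis using matrix_left_invertible_ker invertible_left_inverse by blast
qed

lemma matrix_mul_matrix_inv:
  fixes G :: "real^'n^'n" assumes "invertible G" shows "G ** matrix_inv G = mat 1"
proof -
  have "\<exists>G'. G ** G' = mat 1 \<and> G' ** G = mat 1" using assms unfolding invertible_def .
  then show ?thesis unfolding matrix_inv_def by (rule someI2_ex) blast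
qed

lemma matrix_mul_uminus_right: "(A::real^'n^'m) ** (- B) = - (A ** B)"
  by (simp add: matrix_matrix_mult_def vec_eq_iff sum_negf)

lemma matrix_vector_mult_uminus_left: "(- A) *v x = - (A *v (x::real^'n))"
  by (simp add: matrix_vector_mult_def vec_eq_iff sum_negf)

lemma transpose_add: "transpose (A + B) = transpose A + transpose B"
  unfolding transpose_def by (simp add: vec_eq_iff)

lemma quad_form_diagm: "quad_form (diagm v) z = (\<Sum>i\<in>UNIV. v $ i * (z $ i)\<^sup>2)"
proof -
  have "(diagm v *v z) $ i = v $ i * z $ i" for i
    unfolding diagm_def matrix_vector_mult_def by (simp add: if_distrib if_distribR sum.delta cong: if_cong)
  then show ?thesis unfolding quad_form_def inner_vec_def by (simp add: power2_eq_square algebra_simps)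
qed

lemma quad_form_Mmat:
  "quad_form (Mmat \<delta> C w) y = (\<Sum>i\<in>UNIV. (1 + w $ i) * ((C *v y) $ i)\<^sup>2) / (2*\<delta>\<^sup>2)"
  unfolding Mmat_def quad_form_scaleR_matrix quad_form_transpose_mult quad_form_diagm by simp

lemma transpose_Mmat: "transpose (Mmat \<delta> C w) = Mmat \<delta> C w"
proof -
  have diag: "transpose (diagm v) = diagm v" for v :: "real^'q"
    unfolding diagm_def transpose_def by (simp add: vec_eq_iff)
  show ?thesis unfolding Mmat_def by (simp add: transpose_scalar matrix_transpose_mul matrix_mul_assoc diag)
qed

lemma quad_form_Mmat_nonneg: "\<forall>i. 0 \<le> w $ i \<Longrightarrow> 0 \<le> quad_form (Mmat \<delta> C w) y"
  unfolding quad_form_Mmat by (intro divide_nonneg_nonneg sum_nonneg) auto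

lemma quad_form_Mmat_le:
  fixes C :: "real^'n^'q" assumes "\<forall>i. 0 \<le> w $ i"
  obtains \<kappa> where "\<kappa> \<ge> 0" "\<And>\<delta> z. quad_form (Mmat \<delta> C w) z \<le> \<kappa> / \<delta>\<^sup>2 * (norm z)\<^sup>2"
proof -
  obtain K where K: "K \<ge> 0" "\<And>z. norm (C *v z) \<le> norm z * K"
    using bounded_linear.nonneg_bounded[OF matrix_vector_mul_bounded_linear] by blast
  define \<kappa> where "\<kappa> = (\<Sum>i\<in>UNIV. 1 + w $ i) * K\<^sup>2 / 2"
  have "(\<Sum>i\<in>UNIV. (1 + w $ i) * ((C *v z) $ i)\<^sup>2) \<le> (\<Sum>i\<in>UNIV. (1 + w $ i) * (K\<^sup>2 * (norm z)\<^sup>2))" for z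
  proof (rule sum_mono)
    fix i
    have "((C *v z) $ i)\<^sup>2 \<le> (norm (C *v z))\<^sup>2"
      using power_mono[OF component_le_norm_cart abs_ge_zero, of _ _ 2] by simp
    also have "\<dots> \<le> (norm z * K)\<^sup>2" using K(2)[of z] by (intro power_mono) auto
    finally show "(1 + w $ i) * ((C *v z) $ i)\<^sup>2 \<le> (1 + w $ i) * (K\<^sup>2 * (norm z)\<^sup>2)"
      using assms by (intro mult_left_mono) (auto simp: power_mult_distrib mult.commute)
  qed
  then have "quad_form (Mmat \<delta> C w) z \<le> (\<Sum>i\<in>UNIV. (1 + w $ i) * (K\<^sup>2 * (norm z)\<^sup>2)) / (2*\<delta>\<^sup>2)" for \<delta> z
    unfolding quad_form_Mmat by (rule divide_right_mono) simp
  also have "(\<Sum>i\<in>UNIV. (1 + w $ i) * (K\<^sup>2 * (norm z)\<^sup>2)) / (2*\<delta>\<^sup>2) = \<kappa> / \<delta>\<^sup>2 * (norm z)\<^sup>2" for \<delta> z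
    unfolding \<kappa>_def sum_distrib_right[symmetric] by simp
  finally have "quad_form (Mmat \<delta> C w) z \<le> \<kappa> / \<delta>\<^sup>2 * (norm z)\<^sup>2" for \<delta> z .
  moreover have "\<kappa> \<ge> 0" unfolding \<kappa>_def using assms
    by (intro divide_nonneg_nonneg mult_nonneg_nonneg sum_nonneg) (auto simp: add_nonneg_nonneg)
  ultimately show ?thesis using that by blast
qed

text \<open>Since \<open>\<delta> \<le> 1\<close>, a fixed quadratic form is also \<open>O(1/\<delta>\<^sup>2)\<close>.\<close>
lemma quad_form_add_Mmat_le:
  fixes M :: "real^'n^'n" and C :: "real^'n^'q"
  assumes "\<forall>i. 0 \<le> w $ i" "c \<ge> 0"
  obtains a where "a \<ge> 0"
    "\<And>\<delta> z. 0 < \<delta> \<Longrightarrow> \<delta> \<le> 1 \<Longrightarrow> quad_form (M + c *\<^sub>R Mmat \<delta> C w) z \<le> a / \<delta>\<^sup>2 * (norm z)\<^sup>2"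
proof -
  obtain K where K: "K \<ge> 0" "\<And>z. \<bar>quad_form M z\<bar> \<le> K * (norm z)\<^sup>2"
    using quad_form_le_norm[of M] by blast
  obtain \<kappa> where \<kappa>: "\<kappa> \<ge> 0" "\<And>\<delta> z. quad_form (Mmat \<delta> C w) z \<le> \<kappa> / \<delta>\<^sup>2 * (norm z)\<^sup>2"
    using quad_form_Mmat_le[OF assms(1)] by blast
  have "quad_form (M + c *\<^sub>R Mmat \<delta> C w) z \<le> (K + c * \<kappa>) / \<delta>\<^sup>2 * (norm z)\<^sup>2"
    if "0 < \<delta>" "\<delta> \<le> 1" for \<delta> z
  proof -
    have "K * \<delta>\<^sup>2 \<le> K * 1" using that K(1) by (intro mult_left_mono power_le_one) auto
    then have "K \<le> K / \<delta>\<^sup>2" using that by (simp add: le_divide_eq)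
    then have "K * (norm z)\<^sup>2 \<le> K / \<delta>\<^sup>2 * (norm z)\<^sup>2" by (rule mult_right_mono) simp
    moreover have "c * quad_form (Mmat \<delta> C w) z \<le> c * (\<kappa> / \<delta>\<^sup>2 * (norm z)\<^sup>2)"
      using \<kappa>(2) assms(2) by (rule mult_left_mono)
    moreover have "(K + c * \<kappa>) / \<delta>\<^sup>2 * (norm z)\<^sup>2 = K / \<delta>\<^sup>2 * (norm z)\<^sup>2 + c * (\<kappa> / \<delta>\<^sup>2 * (norm z)\<^sup>2)"
      by (simp add: field_simps add_divide_distrib)
    ultimately show ?thesis
      using abs_le_D1[OF K(2)[of z]] unfolding quad_form_add_matrix quad_form_scaleR_matrix by linarith
  qed
  moreover have "K + c * \<kappa> \<ge> 0" using K(1) \<kappa>(1) assms(2) by simp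
  ultimately show ?thesis using that by blast
qed

section \<open>The recentered barrier\<close>

lemma recbar_centering:
  fixes C :: "real^'n^'q"
  assumes "transpose C *v (\<chi> i. (1 + w $ i) / d $ i) = 0"
  shows "(\<Sum>i\<in>UNIV. (1 + w $ i) * ((C *v y) $ i / d $ i)) = 0"
proof -
  have "(\<chi> i. (1 + w $ i) / d $ i) \<bullet> (C *v y) = 0"
    using inner_matrix_transpose[of y C "\<chi> i. (1 + w $ i) / d $ i"] assms by (simp add: inner_commute)
  then show ?thesis by (simp add: inner_vec_def mult.commute)
qed

text \<open>Each summand of the barrier lies above its linearisation at the origin; by the centering
  condition these linearisations sum to zero.\<close>
lemma relbar_ge_linearisation:
  fixes \<delta> d c :: real assumes "\<delta> > 0" "\<delta> \<le> d"
  shows "c / d \<le> relbar \<delta> (d - c) + ln d"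
  using relbar_ge_tangent[OF assms(1), of d "d - c"] relbar_eq_neg_ln[OF assms] by simp

lemma recbar_eq_sum_excess:
  fixes C :: "real^'n^'q"
  assumes "transpose C *v (\<chi> i. (1 + w $ i) / d $ i) = 0"
  shows "recbar \<delta> C d w y =
    (\<Sum>i\<in>UNIV. (1 + w $ i) * (relbar \<delta> (d $ i - (C *v y) $ i) + ln (d $ i) - (C *v y) $ i / d $ i))"
  using recbar_centering[OF assms, of y] by (simp add: recbar_def right_diff_distrib sum_subtractf)

lemma recbar_nonneg:
  fixes C :: "real^'n^'q"
  assumes "\<delta> > 0" "\<forall>i. \<delta> \<le> d $ i" "\<forall>i. 0 \<le> w $ i"
    and "transpose C *v (\<chi> i. (1 + w $ i) / d $ i) = 0"
  shows "0 \<le> recbar \<delta> C d w y"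
  unfolding recbar_eq_sum_excess[OF assms(4)]
  using relbar_ge_linearisation[OF assms(1)] assms(2,3) by (intro sum_nonneg mult_nonneg_nonneg) auto

lemma recbar_ge_of_violation:
  fixes C :: "real^'n^'q"
  assumes "\<delta> > 0" "\<forall>i. \<delta> \<le> d $ i" "\<forall>i. 0 \<le> w $ i"
    and "transpose C *v (\<chi> i. (1 + w $ i) / d $ i) = 0"
    and viol: "d $ j < (C *v y) $ j"
  shows "1/2 - ln \<delta> + ln (d $ j) \<le> recbar \<delta> C d w y"
proof -
  define g where "g i = relbar \<delta> (d $ i - (C *v y) $ i) + ln (d $ i) - (C *v y) $ i / d $ i" for i
  have g_nonneg: "0 \<le> (1 + w $ i) * g i" for i
    unfolding g_def using relbar_ge_linearisation[OF assms(1)] assms(2,3) by (intro mult_nonneg_nonneg) auto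
  have dj: "\<delta> \<le> d $ j" "0 < d $ j" using assms(1,2) by (auto intro: less_le_trans)
  have "3/2 - ln \<delta> \<le> relbar \<delta> (d $ j - (C *v y) $ j) + (d $ j - (C *v y) $ j) / d $ j"
    using viol by (intro relbar_nonpos_ge[OF assms(1) dj(1)]) auto
  moreover have "(d $ j - (C *v y) $ j) / d $ j = 1 - (C *v y) $ j / d $ j"
    using dj by (simp add: field_simps)
  ultimately have "1/2 - ln \<delta> + ln (d $ j) \<le> g j" unfolding g_def by linarith
  also have "\<dots> \<le> (1 + w $ j) * g j"
  proof -
    have "0 \<le> g j" using calculation ln_mono[OF dj(1) assms(1)] by linarith
    then show ?thesis using assms(3) by (simp add: algebra_simps)
  qed
  also have "\<dots> \<le> (\<Sum>i\<in>UNIV. (1 + w $ i) * g i)" using g_nonneg by (intro member_le_sum) auto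
  finally show ?thesis unfolding recbar_eq_sum_excess[OF assms(4)] g_def .
qed

lemma polyh_of_recbar_le:
  fixes C :: "real^'n^'q"
  assumes "\<delta> > 0" "\<forall>i. \<delta> \<le> d $ i" "\<forall>i. 0 \<le> w $ i"
    and "transpose C *v (\<chi> i. (1 + w $ i) / d $ i) = 0"
    and small: "\<forall>i. \<delta> \<le> d $ i * exp (- b)" and bound: "recbar \<delta> C d w y \<le> b"
  shows "y \<in> polyh C d"
proof (unfold polyh_def, intro CollectI allI, rule ccontr)
  fix j assume "\<not> (C *v y) $ j \<le> d $ j"
  then have "1/2 - ln \<delta> + ln (d $ j) \<le> b"
    using recbar_ge_of_violation[OF assms(1-4), of j y] bound by simp
  moreover have "ln \<delta> \<le> ln (d $ j) - b"
  proof -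
    have "0 < d $ j" using assms(1,2) by (meson less_le_trans)
    then have "ln (d $ j * exp (- b)) = ln (d $ j) - b" by (simp add: ln_mult)
    then show ?thesis using ln_mono[OF small[rule_format, of j] assms(1)] by simp
  qed
  ultimately show False by linarith
qed

lemma recbar_le_of_margin:
  fixes C :: "real^'n^'q"
  assumes "\<delta> > 0" "\<theta> > 0" "\<forall>i. \<delta> \<le> \<theta> * d $ i" "\<forall>i. 0 \<le> w $ i"
    and margin: "\<forall>i. \<theta> * d $ i \<le> d $ i - (C *v y) $ i"
  shows "recbar \<delta> C d w y \<le> (\<Sum>i\<in>UNIV. 1 + w $ i) * (- ln \<theta>)"
  unfolding recbar_def sum_distrib_right
proof (rule sum_mono)
  fix i
  have "0 < \<theta> * d $ i" using assms(1,3) by (meson less_le_trans)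
  then have dpos: "0 < d $ i" using assms(2) zero_less_mult_pos by blast
  have "relbar \<delta> (d $ i - (C *v y) $ i) \<le> relbar \<delta> (\<theta> * d $ i)"
    using relbar_antimono[OF assms(1)] margin by blast
  also have "\<dots> = - ln \<theta> - ln (d $ i)"
    using relbar_eq_neg_ln(1)[OF assms(1)] assms(2,3) dpos by (simp add: ln_mult)
  finally show "(1 + w $ i) * (relbar \<delta> (d $ i - (C *v y) $ i) + ln (d $ i)) \<le> (1 + w $ i) * - ln \<theta>"
    using assms(4) by (intro mult_left_mono) auto
qed

lemma recbar_second_difference:
  fixes C :: "real^'n^'q"
  assumes "\<delta> > 0" "\<forall>i. 0 \<le> w $ i"
  shows "recbar \<delta> C d w (y + h) + recbar \<delta> C d w (y - h)
    \<le> 2 * recbar \<delta> C d w y + 4 * quad_form (Mmat \<delta> C w) h"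
proof -
  define r where "r i v = relbar \<delta> (d $ i - (C *v v) $ i) + ln (d $ i)" for i v
  have "(1 + w $ i) * r i (y + h) + (1 + w $ i) * r i (y - h)
      \<le> 2 * ((1 + w $ i) * r i y) + (1 + w $ i) * (2 * ((C *v h) $ i)\<^sup>2 / \<delta>\<^sup>2)" for i
  proof -
    have "relbar \<delta> ((d $ i - (C *v y) $ i) + - (C *v h) $ i) + relbar \<delta> ((d $ i - (C *v y) $ i) - - (C *v h) $ i)
        \<le> 2 * relbar \<delta> (d $ i - (C *v y) $ i) + 2 * (- (C *v h) $ i)\<^sup>2/\<delta>\<^sup>2"
      by (rule relbar_second_difference[OF assms(1)])
    then have "r i (y + h) + r i (y - h) \<le> 2 * r i y + 2 * ((C *v h) $ i)\<^sup>2 / \<delta>\<^sup>2"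
      unfolding r_def by (simp add: matrix_vector_right_distrib matrix_vector_mult_diff_distrib algebra_simps)
    then have "(1 + w $ i) * (r i (y + h) + r i (y - h)) \<le> (1 + w $ i) * (2 * r i y + 2 * ((C *v h) $ i)\<^sup>2 / \<delta>\<^sup>2)"
      using assms(2) by (intro mult_left_mono) auto
    then show ?thesis by (simp only: distrib_left mult.left_commute[of "1 + w $ i" 2])
  qed
  then have "recbar \<delta> C d w (y + h) + recbar \<delta> C d w (y - h)
      \<le> 2 * recbar \<delta> C d w y + (\<Sum>i\<in>UNIV. (1 + w $ i) * (2 * ((C *v h) $ i)\<^sup>2 / \<delta>\<^sup>2))"
    unfolding recbar_def r_def[symmetric] sum_distrib_left sum.distrib[symmetric] by (rule sum_mono)
  also have "(\<Sum>i\<in>UNIV. (1 + w $ i) * (2 * ((C *v h) $ i)\<^sup>2 / \<delta>\<^sup>2)) = 4 * quad_form (Mmat \<delta> C w) h"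
    unfolding quad_form_Mmat sum_divide_distrib sum_distrib_left
    using assms(1) by (intro sum.cong) (simp_all add: field_simps)
  finally show ?thesis .
qed

lemma recbar_midpoint:
  fixes C :: "real^'n^'q"
  assumes "\<delta> > 0" "\<forall>i. 0 \<le> w $ i"
  shows "recbar \<delta> C d w ((1/2) *\<^sub>R (a + b)) \<le> (recbar \<delta> C d w a + recbar \<delta> C d w b) / 2"
proof -
  define r where "r i v = relbar \<delta> (d $ i - (C *v v) $ i) + ln (d $ i)" for i v
  have "(1 + w $ i) * r i ((1/2) *\<^sub>R (a + b)) \<le> ((1 + w $ i) * r i a + (1 + w $ i) * r i b) / 2" for i
  proof -
    have eq: "d $ i - (C *v ((1/2) *\<^sub>R (a + b))) $ i = ((d $ i - (C *v a) $ i) + (d $ i - (C *v b) $ i))/2"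
      by (simp add: matrix_vector_mult_scaleR matrix_vector_right_distrib field_simps)
    have "relbar \<delta> (d $ i - (C *v ((1/2) *\<^sub>R (a + b))) $ i)
       \<le> (relbar \<delta> (d $ i - (C *v a) $ i) + relbar \<delta> (d $ i - (C *v b) $ i))/2"
      unfolding eq by (rule relbar_midpoint[OF assms(1)])
    then have "r i ((1/2) *\<^sub>R (a + b)) \<le> (r i a + r i b) / 2" unfolding r_def by simp
    then have "(1 + w $ i) * r i ((1/2) *\<^sub>R (a + b)) \<le> (1 + w $ i) * ((r i a + r i b) / 2)"
      using assms(2) by (intro mult_left_mono) auto
    then show ?thesis by (simp add: distrib_left)
  qed
  then have "recbar \<delta> C d w ((1/2) *\<^sub>R (a + b)) \<le> (\<Sum>i\<in>UNIV. ((1 + w $ i) * r i a + (1 + w $ i) * r i b) / 2)"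
    unfolding recbar_def r_def[symmetric] by (rule sum_mono)
  then show ?thesis unfolding recbar_def r_def[symmetric] sum_divide_distrib[symmetric] sum.distrib .
qed

lemma continuous_on_recbar [continuous_intros]:
  "\<delta> > 0 \<Longrightarrow> continuous_on S f \<Longrightarrow> continuous_on S (\<lambda>z. recbar \<delta> C d w (f z))"
  unfolding recbar_def
  by (intro continuous_intros continuous_on_compose2[OF continuous_on_relbar]
      continuous_on_compose2[OF matrix_vector_mult_linear_continuous_on]) auto

lemma traj_add: "traj A B (\<lambda>j. U j + V j) (x + y) k = traj A B U x k + traj A B V y k"
  by (induction k) (auto simp: matrix_vector_right_distrib algebra_simps)

lemma traj_scaleR: "traj A B (\<lambda>j. c *\<^sub>R U j) (c *\<^sub>R x) k = c *\<^sub>R traj A B U x k"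
  by (induction k) (auto simp: matrix_vector_right_distrib matrix_vector_mult_scaleR scaleR_add_right)

lemma traj_diff: "traj A B (\<lambda>j. U j - V j) (x - y) k = traj A B U x k - traj A B V y k"
  using traj_add[of A B U "\<lambda>j. (-1) *\<^sub>R V j" x "(-1) *\<^sub>R y" k] traj_scaleR[of A B "-1" V y k] by simp

lemma traj_cong: "(\<And>j. j < k \<Longrightarrow> U j = V j) \<Longrightarrow> traj A B U x k = traj A B V x k"
  by (induction k) auto

lemma traj_zero: "traj A B (\<lambda>_. 0) 0 k = 0"
  by (induction k) auto

lemma continuous_on_traj: "continuous_on UNIV (\<lambda>U. traj A B U x k)"
proof (induction k)
  case (Suc k)
  have "continuous_on UNIV (\<lambda>U. A *v traj A B U x k)"
    by (rule continuous_on_compose2[OF matrix_vector_mult_linear_continuous_on Suc]) auto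
  moreover have "continuous_on UNIV (\<lambda>U. B *v U k)"
    by (rule continuous_on_compose2[OF matrix_vector_mult_linear_continuous_on
          continuous_on_product_coordinates]) auto
  ultimately show ?case by (simp add: continuous_on_add)
qed simp

lemma seq_norm_nonneg: "0 \<le> seq_norm N U"
  unfolding seq_norm_def by (simp add: sum_nonneg)

lemma norm_le_seq_norm: "k < N \<Longrightarrow> norm (U k) \<le> seq_norm N U"
  unfolding seq_norm_def by (rule real_le_rsqrt) (auto intro: member_le_sum)

lemma traj_norm_le_seq_norm:
  fixes A :: "real^'n^'n" and B :: "real^'m^'n"
  obtains L where "L \<ge> 0" "\<And>U k. k \<le> N \<Longrightarrow> norm (traj A B U 0 k) \<le> L * seq_norm N U"
proof -
  obtain a where a: "a \<ge> 0" "\<And>x. norm (A *v x) \<le> norm x * a"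
    using bounded_linear.nonneg_bounded[OF matrix_vector_mul_bounded_linear] by blast
  obtain b where b: "b \<ge> 0" "\<And>u. norm (B *v u) \<le> norm u * b"
    using bounded_linear.nonneg_bounded[OF matrix_vector_mul_bounded_linear] by blast
  have "\<exists>L\<ge>0. \<forall>U j. j \<le> k \<longrightarrow> j \<le> N \<longrightarrow> norm (traj A B U 0 j) \<le> L * seq_norm N U" for k
  proof (induction k)
    case 0
    show ?case by (intro exI[of _ 0]) simp
  next
    case (Suc k)
    then obtain L where L: "L \<ge> 0" "\<And>U j. j \<le> k \<Longrightarrow> j \<le> N \<Longrightarrow> norm (traj A B U 0 j) \<le> L * seq_norm N U"
      by blast
    have "norm (traj A B U 0 (Suc k)) \<le> (a * L + b) * seq_norm N U" if "Suc k \<le> N" for U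
    proof -
      have "norm (traj A B U 0 (Suc k)) \<le> norm (A *v traj A B U 0 k) + norm (B *v U k)"
        by (simp add: norm_triangle_ineq)
      also have "\<dots> \<le> norm (traj A B U 0 k) * a + norm (U k) * b" using a(2) b(2) by (rule add_mono)
      also have "\<dots> \<le> (L * seq_norm N U) * a + seq_norm N U * b"
        using L that a(1) b(1) norm_le_seq_norm[of k N U] by (intro add_mono mult_right_mono) auto
      finally show ?thesis by (simp add: algebra_simps)
    qed
    then show ?case using L a b
      by (intro exI[of _ "max L (a * L + b)"])
         (auto simp: le_Suc_eq intro: order_trans[OF _ mult_right_mono[OF max.cobounded1 seq_norm_nonneg]]
                                      order_trans[OF _ mult_right_mono[OF max.cobounded2 seq_norm_nonneg]])
  qed
  then show ?thesis using that by blast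
qed

lemma stage_cost_eq:
  "stage_cost \<delta> \<epsilon> Q R Cx dx wx Cu du wu x u =
     quad_form Q x + quad_form R u + \<epsilon> * recbar \<delta> Cx dx wx x + \<epsilon> * recbar \<delta> Cu du wu u"
  by (simp add: stage_cost_def quad_form_def)

lemma cost_N_eq:
  "cost_N A B N l P U x = (\<Sum>k<N. l (traj A B U x k) (U k)) + quad_form P (traj A B U x N)"
  by (simp add: cost_N_def quad_form_def)

lemma stage_cost_ge:
  assumes "\<delta> > 0" "\<forall>i. \<delta> \<le> dx $ i" "\<forall>j. \<delta> \<le> du $ j" "\<forall>i. 0 \<le> wx $ i" "\<forall>j. 0 \<le> wu $ j"
    "transpose Cx *v (\<chi> i. (1 + wx $ i) / dx $ i) = 0"
    "transpose Cu *v (\<chi> i. (1 + wu $ i) / du $ i) = 0"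
    "psd Q" "pd R" "\<epsilon> > 0"
  shows "\<epsilon> * recbar \<delta> Cx dx wx x \<le> stage_cost \<delta> \<epsilon> Q R Cx dx wx Cu du wu x u"
    and "\<epsilon> * recbar \<delta> Cu du wu u \<le> stage_cost \<delta> \<epsilon> Q R Cx dx wx Cu du wu x u"
    and "quad_form R u \<le> stage_cost \<delta> \<epsilon> Q R Cx dx wx Cu du wu x u"
    and "0 \<le> stage_cost \<delta> \<epsilon> Q R Cx dx wx Cu du wu x u"
proof -
  have "0 \<le> \<epsilon> * recbar \<delta> Cx dx wx x" "0 \<le> \<epsilon> * recbar \<delta> Cu du wu u"
    using recbar_nonneg[OF assms(1,2,4,6)] recbar_nonneg[OF assms(1,3,5,7)] assms(10) by simp_all
  moreover have "0 \<le> quad_form Q x" "0 \<le> quad_form R u"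
    using psd_quad_form_nonneg[OF assms(8)] pd_quad_form_nonneg[OF assms(9)] by blast+
  ultimately show "\<epsilon> * recbar \<delta> Cx dx wx x \<le> stage_cost \<delta> \<epsilon> Q R Cx dx wx Cu du wu x u"
    and "\<epsilon> * recbar \<delta> Cu du wu u \<le> stage_cost \<delta> \<epsilon> Q R Cx dx wx Cu du wu x u"
    and "quad_form R u \<le> stage_cost \<delta> \<epsilon> Q R Cx dx wx Cu du wu x u"
    and "0 \<le> stage_cost \<delta> \<epsilon> Q R Cx dx wx Cu du wu x u"
    unfolding stage_cost_eq by linarith+
qed

lemma cost_N_ge_stage:
  assumes "\<And>x u. 0 \<le> l x u" "\<And>z. 0 \<le> quad_form P z" "k < N"
  shows "l (traj A B U x k) (U k) \<le> cost_N A B N l P U x"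
proof -
  have "l (traj A B U x k) (U k) \<le> (\<Sum>j<N. l (traj A B U x j) (U j))"
    by (rule member_le_sum) (use assms in auto)
  then show ?thesis unfolding cost_N_eq using assms(2)[of "traj A B U x N"] by linarith
qed

lemma stage_cost_second_difference:
  assumes "\<delta> > 0" "\<epsilon> \<ge> 0" "\<forall>i. 0 \<le> wx $ i" "\<forall>j. 0 \<le> wu $ j"
  shows "stage_cost \<delta> \<epsilon> Q R Cx dx wx Cu du wu (y + h) (u + e)
       + stage_cost \<delta> \<epsilon> Q R Cx dx wx Cu du wu (y - h) (u - e)
    \<le> 2 * stage_cost \<delta> \<epsilon> Q R Cx dx wx Cu du wu y u
       + 2 * (quad_form (Q + (2*\<epsilon>) *\<^sub>R Mmat \<delta> Cx wx) h + quad_form (R + (2*\<epsilon>) *\<^sub>R Mmat \<delta> Cu wu) e)"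
proof -
  have "\<epsilon> * (recbar \<delta> Cx dx wx (y + h) + recbar \<delta> Cx dx wx (y - h))
      \<le> \<epsilon> * (2 * recbar \<delta> Cx dx wx y + 4 * quad_form (Mmat \<delta> Cx wx) h)"
    and "\<epsilon> * (recbar \<delta> Cu du wu (u + e) + recbar \<delta> Cu du wu (u - e))
      \<le> \<epsilon> * (2 * recbar \<delta> Cu du wu u + 4 * quad_form (Mmat \<delta> Cu wu) e)"
    using recbar_second_difference[OF assms(1,3)] recbar_second_difference[OF assms(1,4)] assms(2)
    by (blast intro: mult_left_mono)+
  then show ?thesis
    unfolding stage_cost_eq quad_form_add_matrix quad_form_scaleR_matrix
    using quad_form_parallelogram[of Q y h] quad_form_parallelogram[of R u e]
    by (simp add: algebra_simps)
qed

lemma cost_second_difference: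
  assumes "\<delta> > 0" "\<epsilon> \<ge> 0" "\<forall>i. 0 \<le> wx $ i" "\<forall>j. 0 \<le> wu $ j"
  shows "cost_N A B N (stage_cost \<delta> \<epsilon> Q R Cx dx wx Cu du wu) P (\<lambda>k. U k + D k) x
       + cost_N A B N (stage_cost \<delta> \<epsilon> Q R Cx dx wx Cu du wu) P (\<lambda>k. U k - D k) x
    \<le> 2 * cost_N A B N (stage_cost \<delta> \<epsilon> Q R Cx dx wx Cu du wu) P U x
       + 2 * cost_N A B N (\<lambda>h e. quad_form (Q + (2*\<epsilon>) *\<^sub>R Mmat \<delta> Cx wx) h
                                 + quad_form (R + (2*\<epsilon>) *\<^sub>R Mmat \<delta> Cu wu) e) P D 0"
proof -
  let ?l = "stage_cost \<delta> \<epsilon> Q R Cx dx wx Cu du wu"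
  have plus: "traj A B (\<lambda>k. U k + D k) x k = traj A B U x k + traj A B D 0 k"
    and minus: "traj A B (\<lambda>k. U k - D k) x k = traj A B U x k - traj A B D 0 k" for k
    using traj_add[of A B U D x 0 k] traj_diff[of A B U D x 0 k] by simp_all
  have "(\<Sum>k<N. ?l (traj A B (\<lambda>k. U k + D k) x k) (U k + D k) + ?l (traj A B (\<lambda>k. U k - D k) x k) (U k - D k))
     \<le> (\<Sum>k<N. 2 * ?l (traj A B U x k) (U k)
          + 2 * (quad_form (Q + (2*\<epsilon>) *\<^sub>R Mmat \<delta> Cx wx) (traj A B D 0 k)
                 + quad_form (R + (2*\<epsilon>) *\<^sub>R Mmat \<delta> Cu wu) (D k)))"
    unfolding plus minus by (intro sum_mono stage_cost_second_difference[OF assms])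
  then show ?thesis
    unfolding cost_N_eq plus minus
    using quad_form_parallelogram[of P "traj A B U x N" "traj A B D 0 N"]
    by (simp add: sum.distrib sum_distrib_left)
qed

lemma cost_midpoint:
  assumes "\<delta> > 0" "\<epsilon> \<ge> 0" "\<forall>i. 0 \<le> wx $ i" "\<forall>j. 0 \<le> wu $ j" "psd Q"
    and P_nonneg: "\<And>z. 0 \<le> quad_form P z"
  shows "cost_N A B N (stage_cost \<delta> \<epsilon> Q R Cx dx wx Cu du wu) P (\<lambda>k. (1/2) *\<^sub>R (U k + V k)) x
    \<le> (cost_N A B N (stage_cost \<delta> \<epsilon> Q R Cx dx wx Cu du wu) P U x
       + cost_N A B N (stage_cost \<delta> \<epsilon> Q R Cx dx wx Cu du wu) P V x) / 2
      - (\<Sum>k<N. quad_form R (U k - V k)) / 4"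
proof -
  let ?l = "stage_cost \<delta> \<epsilon> Q R Cx dx wx Cu du wu"
  have mid: "traj A B (\<lambda>k. (1/2) *\<^sub>R (U k + V k)) x k = (1/2) *\<^sub>R (traj A B U x k + traj A B V x k)" for k
    using traj_scaleR[of A B "1/2" "\<lambda>k. U k + V k" "x + x" k] traj_add[of A B U V x x k]
    by (simp add: scaleR_add_right[symmetric])
  have "?l (traj A B (\<lambda>k. (1/2) *\<^sub>R (U k + V k)) x k) ((1/2) *\<^sub>R (U k + V k))
     \<le> (?l (traj A B U x k) (U k) + ?l (traj A B V x k) (V k))/2 - quad_form R (U k - V k)/4" for k
  proof -
    let ?a = "traj A B U x k" and ?b = "traj A B V x k"
    have "\<epsilon> * recbar \<delta> Cx dx wx ((1/2) *\<^sub>R (?a + ?b)) \<le> \<epsilon> * ((recbar \<delta> Cx dx wx ?a + recbar \<delta> Cx dx wx ?b)/2)"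
      and "\<epsilon> * recbar \<delta> Cu du wu ((1/2) *\<^sub>R (U k + V k)) \<le> \<epsilon> * ((recbar \<delta> Cu du wu (U k) + recbar \<delta> Cu du wu (V k))/2)"
      using recbar_midpoint[OF assms(1,3)] recbar_midpoint[OF assms(1,4)] assms(2)
      by (blast intro: mult_left_mono)+
    then show ?thesis
      unfolding mid stage_cost_eq
      using quad_form_midpoint[of Q ?a ?b] psd_quad_form_nonneg[OF assms(5), of "?a - ?b"]
        quad_form_midpoint[of R "U k" "V k"]
      by (simp add: field_simps)
  qed
  then have "(\<Sum>k<N. ?l (traj A B (\<lambda>k. (1/2) *\<^sub>R (U k + V k)) x k) ((1/2) *\<^sub>R (U k + V k)))
     \<le> ((\<Sum>k<N. ?l (traj A B U x k) (U k)) + (\<Sum>k<N. ?l (traj A B V x k) (V k)))/2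
        - (\<Sum>k<N. quad_form R (U k - V k))/4"
    unfolding sum_divide_distrib sum.distrib[symmetric] sum_subtractf[symmetric] by (rule sum_mono)
  moreover have "quad_form P ((1/2) *\<^sub>R (traj A B U x N + traj A B V x N))
      \<le> (quad_form P (traj A B U x N) + quad_form P (traj A B V x N))/2"
    using quad_form_midpoint[of P "traj A B U x N" "traj A B V x N"]
      P_nonneg[of "traj A B U x N - traj A B V x N"] by (simp add: field_simps)
  ultimately show ?thesis unfolding cost_N_eq mid by (simp add: field_simps)
qed

lemma continuous_on_cost_N:
  assumes "\<delta> > 0"
  shows "continuous_on UNIV (\<lambda>U. cost_N A B N (stage_cost \<delta> \<epsilon> Q R Cx dx wx Cu du wu) P U x)"
  unfolding cost_N_eq stage_cost_eq
  by (intro continuous_intros continuous_on_traj assms continuous_on_product_coordinates)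

lemma quadratic_cost_le:
  assumes traj_le: "\<And>U k. k \<le> N \<Longrightarrow> norm (traj A B U 0 k) \<le> L * seq_norm N U" and "L \<ge> 0"
    and "\<And>z. quad_form Qt z \<le> a * (norm z)\<^sup>2" "\<And>z. quad_form Rt z \<le> b * (norm z)\<^sup>2"
    and "\<And>z. quad_form Pt z \<le> p * (norm z)\<^sup>2" "a \<ge> 0" "b \<ge> 0" "p \<ge> 0"
  shows "cost_N A B N (\<lambda>h e. quad_form Qt h + quad_form Rt e) Pt D 0
    \<le> (real N * (a * L\<^sup>2 + b) + p * L\<^sup>2) * (seq_norm N D)\<^sup>2"
proof -
  let ?S = "seq_norm N D"
  have traj_sq: "(norm (traj A B D 0 k))\<^sup>2 \<le> L\<^sup>2 * ?S\<^sup>2" if "k \<le> N" for k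
    using power_mono[OF traj_le[OF that, of D] norm_ge_zero, of 2] by (simp add: power_mult_distrib)
  have "quad_form Qt (traj A B D 0 k) + quad_form Rt (D k) \<le> (a * L\<^sup>2 + b) * ?S\<^sup>2" if "k < N" for k
  proof -
    have "(norm (D k))\<^sup>2 \<le> ?S\<^sup>2" using power_mono[OF norm_le_seq_norm[OF that, of D] norm_ge_zero, of 2] by blast
    then show ?thesis
      using assms(3)[of "traj A B D 0 k"] assms(4)[of "D k"] traj_sq[of k] that assms(6,7)
        mult_left_mono[of "(norm (traj A B D 0 k))\<^sup>2" "L\<^sup>2 * ?S\<^sup>2" a]
        mult_left_mono[of "(norm (D k))\<^sup>2" "?S\<^sup>2" b]
      by (simp add: algebra_simps)
  qed
  then have "(\<Sum>k<N. quad_form Qt (traj A B D 0 k) + quad_form Rt (D k)) \<le> real N * ((a * L\<^sup>2 + b) * ?S\<^sup>2)"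
    using sum_mono[of "{..<N}" _ "\<lambda>_. (a * L\<^sup>2 + b) * ?S\<^sup>2"] by simp
  moreover have "quad_form Pt (traj A B D 0 N) \<le> p * (L\<^sup>2 * ?S\<^sup>2)"
    using assms(5)[of "traj A B D 0 N"] mult_left_mono[OF traj_sq[of N] assms(8)] by simp
  ultimately show ?thesis unfolding cost_N_eq by (simp add: algebra_simps)
qed

section \<open>Minimisers of strongly convex coercive functionals\<close>

lemma exists_minimizer_seqs:
  fixes F :: "(nat \<Rightarrow> real^'m) \<Rightarrow> real"
  assumes cont: "continuous_on UNIV F" and "c > 0"
    and coercive: "\<And>U k. U \<in> seqs N \<Longrightarrow> k < N \<Longrightarrow> c * (norm (U k))\<^sup>2 \<le> F U"
  obtains T where "T \<in> seqs N" "\<And>V. V \<in> seqs N \<Longrightarrow> F T \<le> F V"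
proof -
  \<comment> \<open>outside the compact box of radius \<open>r\<close>, \<open>F\<close> exceeds \<open>F 0\<close>\<close>
  define r where "r = sqrt ((\<bar>F (\<lambda>_. 0)\<bar> + 1) / c)"
  have r: "r \<ge> 0" "c * r\<^sup>2 = \<bar>F (\<lambda>_. 0)\<bar> + 1" using \<open>c > 0\<close> by (simp_all add: r_def)
  define S where "S = PiE UNIV (\<lambda>k. if k < N then cball (0::real^'m) r else {0})"
  have "compactin (product_topology (\<lambda>_. euclidean) UNIV) S"
    unfolding S_def compactin_PiE by auto
  then have "compact S" by (simp add: euclidean_product_topology)
  moreover have zero_S: "(\<lambda>_. 0) \<in> S" unfolding S_def using r by auto
  ultimately obtain T where T: "T \<in> S" "\<And>V. V \<in> S \<Longrightarrow> F T \<le> F V"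
    using continuous_attains_inf[of S F] continuous_on_subset[OF cont, of S] by blast
  have S_seqs: "S \<subseteq> seqs N"
  proof
    fix U assume "U \<in> S"
    then have U_k: "U k \<in> (if k < N then cball 0 r else {0})" for k unfolding S_def by (simp add: PiE_iff)
    have "U k = 0" if "N \<le> k" for k using U_k[of k] that by simp
    then show "U \<in> seqs N" unfolding seqs_def by blast
  qed
  have "F T \<le> F V" if V: "V \<in> seqs N" for V
  proof (cases "V \<in> S")
    case False
    then obtain k where k: "V k \<notin> (if k < N then cball 0 r else {0})" by (auto simp: S_def PiE_iff)
    then have "k < N" using V unfolding seqs_def by (cases "k < N") auto
    with k have "r\<^sup>2 \<le> (norm (V k))\<^sup>2" using r by (intro power_mono) auto
    then have "\<bar>F (\<lambda>_. 0)\<bar> + 1 \<le> F V"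
      using coercive[OF V \<open>k < N\<close>] mult_left_mono[of "r\<^sup>2" "(norm (V k))\<^sup>2" c] \<open>c > 0\<close> r by simp
    then show ?thesis using T(2)[OF zero_S] by linarith
  qed (use T in blast)
  then show ?thesis using that T(1) S_seqs by blast
qed

lemma exists_unique_minimizer_seqs:
  fixes F :: "(nat \<Rightarrow> real^'m) \<Rightarrow> real"
  assumes "pd R" and cont: "continuous_on UNIV F"
    and coercive: "\<And>U k. U \<in> seqs N \<Longrightarrow> k < N \<Longrightarrow> quad_form R (U k) \<le> F U"
    and midpoint: "\<And>U V. U \<in> seqs N \<Longrightarrow> V \<in> seqs N \<Longrightarrow>
        F (\<lambda>k. (1/2) *\<^sub>R (U k + V k)) \<le> (F U + F V)/2 - (\<Sum>k<N. quad_form R (U k - V k))/4"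
  shows "\<exists>!U. U \<in> seqs N \<and> (\<forall>V\<in>seqs N. F U \<le> F V)"
proof -
  obtain c where c: "c > 0" "\<And>u. c * (norm u)\<^sup>2 \<le> quad_form R u"
    using pd_quad_form_ge_norm[OF assms(1)] by blast
  have "c * (norm (U k))\<^sup>2 \<le> F U" if "U \<in> seqs N" "k < N" for U k
    using c(2)[of "U k"] coercive[OF that] by linarith
  then obtain T where T: "T \<in> seqs N" "\<And>V. V \<in> seqs N \<Longrightarrow> F T \<le> F V"
    using exists_minimizer_seqs[OF cont c(1)] by blast
  have "U = T" if U: "U \<in> seqs N" "\<forall>V\<in>seqs N. F U \<le> F V" for U
  proof -
    have mid_seqs: "(\<lambda>k. (1/2) *\<^sub>R (U k + T k)) \<in> seqs N" using U T by (simp add: seqs_def)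
    have nonneg: "0 \<le> quad_form R (U k - T k)" for k by (rule pd_quad_form_nonneg[OF assms(1)])
    have "F U \<le> F (\<lambda>k. (1/2) *\<^sub>R (U k + T k))" using U(2) mid_seqs by blast
    moreover have "F U = F T" using U T by (meson order_antisym)
    ultimately have "F U \<le> F U - (\<Sum>k<N. quad_form R (U k - T k))/4"
      using midpoint[OF U(1) T(1)] by simp
    then have "(\<Sum>k<N. quad_form R (U k - T k)) \<le> 0" by simp
    then have "\<forall>k\<in>{..<N}. quad_form R (U k - T k) = 0"
      using sum_nonneg_eq_0_iff[of "{..<N}"] nonneg by (meson finite_lessThan order_antisym sum_nonneg)
    then have "U k = T k" for k
      using pd_quad_form_pos[OF assms(1), of "U k - T k"] U(1) T(1)
      by (cases "k < N") (auto simp: seqs_def)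
    then show ?thesis by blast
  qed
  then show ?thesis using T by blast
qed

section \<open>The Riccati equation and the terminal weight\<close>

text \<open>\<open>gainK\<close> is the stationary point of the quadratic \<open>u \<mapsto> (A x + B u)\<^sup>T P (A x + B u) + u\<^sup>T R\<^sub>t u\<close>,
  so the cross term of the expansion around \<open>u = K x\<close> vanishes.\<close>
lemma gainK_cross_term:
  fixes A :: "real^'n^'n" and B :: "real^'m^'n" and P :: "real^'n^'n" and R Mu :: "real^'m^'m"
    and x :: "real^'n" and e :: "real^'m"
  assumes "invertible (R + transpose B ** P ** B + \<epsilon> *\<^sub>R Mu)"
  defines "v \<equiv> gainK A B R \<epsilon> Mu P *v x"
  shows "(B *v e) \<bullet> (P *v (A *v x + B *v v)) + e \<bullet> ((R + \<epsilon> *\<^sub>R Mu) *v v) = 0"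
proof -
  define G where "G = R + transpose B ** P ** B + \<epsilon> *\<^sub>R Mu"
  have "G ** gainK A B R \<epsilon> Mu P = - (G ** matrix_inv G ** (transpose B ** P ** A))"
    unfolding gainK_def G_def by (simp add: matrix_mul_assoc matrix_mul_uminus_right)
  also have "\<dots> = - (transpose B ** P ** A)" using matrix_mul_matrix_inv[OF assms(1)] unfolding G_def by simp
  finally have "G *v v = (- (transpose B ** P ** A)) *v x" unfolding v_def by (simp add: matrix_vector_mul_assoc)
  then have G_v: "G *v v = - (transpose B *v (P *v (A *v x)))"
    by (simp add: matrix_vector_mul_assoc[symmetric] matrix_vector_mult_uminus_left)
  have "(B *v e) \<bullet> (P *v (A *v x + B *v v)) = e \<bullet> (transpose B *v (P *v (A *v x + B *v v)))"
    by (rule inner_matrix_transpose[symmetric])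
  also have "\<dots> = e \<bullet> (transpose B *v (P *v (A *v x))) + e \<bullet> ((transpose B ** P ** B) *v v)"
    by (simp add: matrix_vector_right_distrib inner_add_right matrix_vector_mul_assoc matrix_mul_assoc)
  finally have "(B *v e) \<bullet> (P *v (A *v x + B *v v)) + e \<bullet> ((R + \<epsilon> *\<^sub>R Mu) *v v)
      = e \<bullet> (transpose B *v (P *v (A *v x))) + e \<bullet> (G *v v)"
    unfolding G_def by (simp add: matrix_vector_mult_add_rdistrib inner_add_right algebra_simps)
  then show ?thesis unfolding G_v by simp
qed

text \<open>The Riccati equation makes \<open>x \<mapsto> x\<^sup>T P x\<close> the value of the unconstrained infinite-horizon
  problem with stage cost \<open>Q\<^sub>t\<close>, \<open>R\<^sub>t\<close>.\<close>
lemma riccati_bellman_inequality: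
  fixes A :: "real^'n^'n" and B :: "real^'m^'n" and P Qt :: "real^'n^'n" and R Mu :: "real^'m^'m"
  assumes P_sym: "transpose P = P" and P_nonneg: "\<And>z. 0 \<le> quad_form P z"
    and Rt_sym: "transpose (R + \<epsilon> *\<^sub>R Mu) = R + \<epsilon> *\<^sub>R Mu"
    and Rt_nonneg: "\<And>z. 0 \<le> quad_form (R + \<epsilon> *\<^sub>R Mu) z"
    and G_inv: "invertible (R + transpose B ** P ** B + \<epsilon> *\<^sub>R Mu)"
    and ric: "P = transpose (A + B ** gainK A B R \<epsilon> Mu P) ** P ** (A + B ** gainK A B R \<epsilon> Mu P)
               + transpose (gainK A B R \<epsilon> Mu P) ** (R + \<epsilon> *\<^sub>R Mu) ** gainK A B R \<epsilon> Mu P + Qt"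
  shows "quad_form P x \<le> quad_form P (A *v x + B *v u) + quad_form Qt x + quad_form (R + \<epsilon> *\<^sub>R Mu) u"
proof -
  define K where "K = gainK A B R \<epsilon> Mu P"
  define Rt where "Rt = R + \<epsilon> *\<^sub>R Mu"
  define v where "v = K *v x"
  define e where "e = u - v"
  have closed_loop: "(A + B ** K) *v x = A *v x + B *v v"
    by (simp add: matrix_vector_mult_add_rdistrib matrix_vector_mul_assoc[symmetric] v_def)
  have "quad_form P x = quad_form (transpose (A + B ** K) ** P ** (A + B ** K)) x
      + quad_form (transpose K ** Rt ** K) x + quad_form Qt x"
    by (subst ric) (simp add: quad_form_add_matrix K_def Rt_def)
  then have value_at_gain: "quad_form P x = quad_form P (A *v x + B *v v) + quad_form Rt v + quad_form Qt x"
    unfolding quad_form_transpose_mult closed_loop v_def .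
  have cross: "(B *v e) \<bullet> (P *v (A *v x + B *v v)) + e \<bullet> (Rt *v v) = 0"
    using gainK_cross_term[OF G_inv, where A = A and x = x and e = e]
    unfolding Rt_def[symmetric] K_def[symmetric] v_def[symmetric] .
  have "quad_form P (A *v x + B *v u) + quad_form Rt u
      = quad_form P (A *v x + B *v v) + quad_form Rt v + quad_form P (B *v e) + quad_form Rt e"
    using quad_form_add_symmetric[OF P_sym, of "A *v x + B *v v" "B *v e"]
      quad_form_add_symmetric[of Rt v e] Rt_sym cross
    unfolding Rt_def[symmetric] e_def by (simp add: matrix_vector_right_distrib algebra_simps)
  then show ?thesis
    using value_at_gain P_nonneg[of "B *v e"] Rt_nonneg[of e] unfolding Rt_def by linarith
qed

lemma bellman_inequality_telescope:
  assumes step: "\<And>x u. quad_form P x \<le> quad_form P (A *v x + B *v u) + f x + g u"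
  shows "quad_form P x \<le> (\<Sum>t<k. f (traj A B D x t) + g (D t)) + quad_form P (traj A B D x k)"
proof (induction k)
  case (Suc k)
  then show ?case using step[of "traj A B D x k" "D k"] by simp
qed simp

text \<open>Steer \<open>y\<close> with the difference of feasible inputs from \<open>p + s y\<close> and from \<open>p\<close>, divided by \<open>s\<close>.\<close>
lemma steer_to_origin:
  fixes A :: "real^'n^'n" and B :: "real^'m^'n" and Cx :: "real^'n^'qx" and Cu :: "real^'m^'qu"
  assumes ball: "ball p e \<subseteq> feasible_set A B Cx dx Cu du N" and "e > 0"
    and Xm: "\<And>z. z \<in> polyh Cx dx \<Longrightarrow> norm z \<le> Xmax"
    and Um: "\<And>z. z \<in> polyh Cu du \<Longrightarrow> norm z \<le> Umax"
    and "Xmax \<ge> 0" "Umax \<ge> 0"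
  obtains D where "traj A B D y N = 0"
    "\<And>k. k < N \<Longrightarrow> norm (D k) \<le> (4*Umax/e) * norm y"
    "\<And>k. k < N \<Longrightarrow> norm (traj A B D y k) \<le> (4*Xmax/e) * norm y"
proof (cases "y = 0")
  case True
  show ?thesis by (rule that[of "\<lambda>_. 0"]) (use True assms(2,5,6) in \<open>simp_all add: traj_zero\<close>)
next
  case False
  define s where "s = (e/2) / norm y"
  have s: "s > 0" "1/s = (2/e) * norm y" using \<open>e > 0\<close> False by (simp_all add: s_def)
  have "p + s *\<^sub>R y \<in> feasible_set A B Cx dx Cu du N" "p \<in> feasible_set A B Cx dx Cu du N"
    using ball \<open>e > 0\<close> False by (auto simp: s_def dist_norm)
  then obtain U1 U2 where
    U1: "\<forall>k<N. U1 k \<in> polyh Cu du" "\<forall>k<N. traj A B U1 (p + s *\<^sub>R y) k \<in> polyh Cx dx"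
        "traj A B U1 (p + s *\<^sub>R y) N = 0" and
    U2: "\<forall>k<N. U2 k \<in> polyh Cu du" "\<forall>k<N. traj A B U2 p k \<in> polyh Cx dx" "traj A B U2 p N = 0"
    unfolding feasible_set_def by blast
  define D where "D = (\<lambda>k. (1/s) *\<^sub>R (U1 k - U2 k))"
  have traj_D: "traj A B D y k = (1/s) *\<^sub>R (traj A B U1 (p + s *\<^sub>R y) k - traj A B U2 p k)" for k
  proof -
    have "traj A B D y k = traj A B (\<lambda>j. (1/s) *\<^sub>R (U1 j - U2 j)) ((1/s) *\<^sub>R ((p + s *\<^sub>R y) - p)) k"
      using s(1) by (simp add: D_def)
    also have "\<dots> = (1/s) *\<^sub>R traj A B (\<lambda>j. U1 j - U2 j) ((p + s *\<^sub>R y) - p) k" by (rule traj_scaleR)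
    finally show ?thesis by (simp only: traj_diff)
  qed
  have diam: "norm (a - b) \<le> 2 * M" if "norm a \<le> M" "norm b \<le> M" for a b :: "real^'z" and M
    using norm_triangle_ineq4[of a b] that by linarith
  show ?thesis
  proof (rule that)
    show "traj A B D y N = 0" using traj_D U1(3) U2(3) by simp
    fix k assume "k < N"
    have "norm (D k) \<le> (1/s) * (2 * Umax)"
      using diam[OF Um Um] U1(1) U2(1) \<open>k < N\<close> s(1) unfolding D_def by (simp add: divide_right_mono)
    then show "norm (D k) \<le> (4*Umax/e) * norm y" by (simp add: s(2) mult_ac)
    have "norm (traj A B D y k) \<le> (1/s) * (2 * Xmax)"
      using diam[OF Xm Xm] U1(2) U2(2) \<open>k < N\<close> s(1) unfolding traj_D by (simp add: divide_right_mono)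
    then show "norm (traj A B D y k) \<le> (4*Xmax/e) * norm y" by (simp add: s(2) mult_ac)
  qed
qed

lemma quad_form_le_of_steering:
  fixes A :: "real^'n^'n" and B :: "real^'m^'n" and Cx :: "real^'n^'qx" and Cu :: "real^'m^'qu"
  assumes step: "\<And>x u. quad_form P x \<le> quad_form P (A *v x + B *v u) + quad_form Qt x + quad_form Rt u"
    and "\<And>z. quad_form Qt z \<le> a * (norm z)\<^sup>2" "\<And>z. quad_form Rt z \<le> b * (norm z)\<^sup>2" "a \<ge> 0" "b \<ge> 0"
    and "ball p e \<subseteq> feasible_set A B Cx dx Cu du N" "e > 0"
    and "\<And>z. z \<in> polyh Cx dx \<Longrightarrow> norm z \<le> Xmax" "\<And>z. z \<in> polyh Cu du \<Longrightarrow> norm z \<le> Umax"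
    and "Xmax \<ge> 0" "Umax \<ge> 0"
  shows "quad_form P y \<le> real N * (a * (4*Xmax/e)\<^sup>2 + b * (4*Umax/e)\<^sup>2) * (norm y)\<^sup>2"
proof -
  obtain D where D: "traj A B D y N = 0"
    "\<And>k. k < N \<Longrightarrow> norm (D k) \<le> (4*Umax/e) * norm y"
    "\<And>k. k < N \<Longrightarrow> norm (traj A B D y k) \<le> (4*Xmax/e) * norm y"
    using steer_to_origin[OF assms(6-11)] by blast
  have "quad_form Qt (traj A B D y k) + quad_form Rt (D k)
      \<le> (a * (4*Xmax/e)\<^sup>2 + b * (4*Umax/e)\<^sup>2) * (norm y)\<^sup>2" if "k < N" for k
  proof -
    have "(norm (traj A B D y k))\<^sup>2 \<le> ((4*Xmax/e) * norm y)\<^sup>2" "(norm (D k))\<^sup>2 \<le> ((4*Umax/e) * norm y)\<^sup>2"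
      using D(2,3)[OF that] by (auto intro: power_mono)
    then have "a * (norm (traj A B D y k))\<^sup>2 \<le> a * ((4*Xmax/e) * norm y)\<^sup>2"
      "b * (norm (D k))\<^sup>2 \<le> b * ((4*Umax/e) * norm y)\<^sup>2"
      using assms(4,5) by (auto intro: mult_left_mono)
    moreover have "a * ((4*Xmax/e) * norm y)\<^sup>2 + b * ((4*Umax/e) * norm y)\<^sup>2
        = (a * (4*Xmax/e)\<^sup>2 + b * (4*Umax/e)\<^sup>2) * (norm y)\<^sup>2"
      by (simp only: power_mult_distrib distrib_right mult.assoc)
    ultimately show ?thesis
      using assms(2)[of "traj A B D y k"] assms(3)[of "D k"] by linarith
  qed
  then have "(\<Sum>t<N. quad_form Qt (traj A B D y t) + quad_form Rt (D t))
      \<le> real N * ((a * (4*Xmax/e)\<^sup>2 + b * (4*Umax/e)\<^sup>2) * (norm y)\<^sup>2)"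
    using sum_mono[of "{..<N}" _ "\<lambda>_. (a * (4*Xmax/e)\<^sup>2 + b * (4*Umax/e)\<^sup>2) * (norm y)\<^sup>2"] by simp
  moreover have "quad_form P y \<le> (\<Sum>t<N. quad_form Qt (traj A B D y t) + quad_form Rt (D t))"
    using bellman_inequality_telescope[OF step, where x=y and k=N and D=D] D(1) by (simp add: quad_form_def)
  ultimately show ?thesis by (simp add: mult.assoc)
qed

section \<open>Descent along the closed loop\<close>

lemma shiftop_seqs: "shiftop N kf U x \<in> seqs N"
  unfolding shiftop_def seqs_def by auto

lemma Phi_descent:
  fixes J :: "(nat \<Rightarrow> real^'m) \<Rightarrow> real^'n \<Rightarrow> real"
  assumes shift: "\<And>U x. U \<in> seqs N \<Longrightarrow> J (shiftop N kf U x) (A *v x + B *v U 0) \<le> J U x"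
    and update: "\<And>U x. U \<in> seqs N \<Longrightarrow> Psio U x \<in> seqs N \<and> J (Psio U x) x \<le> J U x"
    and "U \<in> seqs N"
  shows "Phi A B N kf Psio i U x \<in> seqs N \<and> J (Phi A B N kf Psio i U x) (A *v x + B *v U 0) \<le> J U x"
proof (induction i)
  case 0
  show ?case using shift[OF \<open>U \<in> seqs N\<close>] shiftop_seqs by simp
next
  case (Suc i)
  then show ?case using update[of "Phi A B N kf Psio i U x" "A *v x + B *v U 0"] by (auto intro: order_trans)
qed

lemma closed_loop_descent:
  fixes J :: "(nat \<Rightarrow> real^'m) \<Rightarrow> real^'n \<Rightarrow> real"
  assumes shift: "\<And>U x. U \<in> seqs N \<Longrightarrow> J (shiftop N kf U x) (A *v x + B *v U 0) \<le> J U x"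
    and update: "\<And>U x. U \<in> seqs N \<Longrightarrow> Psio U x \<in> seqs N \<and> J (Psio U x) x \<le> J U x"
    and "U0 \<in> seqs N" and "closed_loop A B N kf Psio iT x0 U0 k = (x, U)"
  shows "U \<in> seqs N \<and> J U x \<le> J U0 x0"
  using assms(4)
proof (induction k arbitrary: x U)
  case 0
  then show ?case using \<open>U0 \<in> seqs N\<close> by simp
next
  case (Suc k)
  obtain x' U' where prev: "closed_loop A B N kf Psio iT x0 U0 k = (x', U')" by fastforce
  then show ?case
    using Suc Phi_descent[OF shift update, of U' "iT k" x'] by (auto intro: order_trans)
qed

text \<open>Scale a feasible input sequence for \<open>(1 + \<eta>) x\<close> by \<open>1/(1 + \<eta>)\<close>.\<close>
lemma feasible_with_margin:
  fixes A :: "real^'n^'n" and B :: "real^'m^'n" and Cx :: "real^'n^'qx" and Cu :: "real^'m^'qu"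
  assumes "(1 + \<eta>) *\<^sub>R x \<in> feasible_set A B Cx dx Cu du N" "\<eta> > 0"
    and "\<forall>i. 0 < dx $ i" "\<forall>j. 0 < du $ j"
  obtains V where "V \<in> seqs N" "traj A B V x N = 0"
    "\<And>k i. k < N \<Longrightarrow> (\<eta>/(1+\<eta>)) * dx $ i \<le> dx $ i - (Cx *v traj A B V x k) $ i"
    "\<And>k j. k < N \<Longrightarrow> (\<eta>/(1+\<eta>)) * du $ j \<le> du $ j - (Cu *v V k) $ j"
proof -
  obtain U where U: "\<forall>k<N. U k \<in> polyh Cu du" "\<forall>k<N. traj A B U ((1 + \<eta>) *\<^sub>R x) k \<in> polyh Cx dx"
     "traj A B U ((1 + \<eta>) *\<^sub>R x) N = 0"
    using assms(1) unfolding feasible_set_def by blast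
  define c where "c = 1/(1+\<eta>)"
  have c: "0 < c" "c \<le> 1" "\<eta>/(1+\<eta>) = 1 - c" using assms(2) by (auto simp: c_def field_simps)
  define V where "V k = (if k < N then c *\<^sub>R U k else 0)" for k
  have traj_V: "traj A B V x k = c *\<^sub>R traj A B U ((1 + \<eta>) *\<^sub>R x) k" if "k \<le> N" for k
  proof -
    have cx: "c *\<^sub>R ((1 + \<eta>) *\<^sub>R x) = x" using assms(2) by (simp add: c_def)
    have "traj A B V x k = traj A B (\<lambda>j. c *\<^sub>R U j) (c *\<^sub>R ((1 + \<eta>) *\<^sub>R x)) k"
      unfolding cx by (rule traj_cong) (use that in \<open>auto simp: V_def\<close>)
    also have "\<dots> = c *\<^sub>R traj A B U ((1 + \<eta>) *\<^sub>R x) k" by (rule traj_scaleR)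
    finally show ?thesis .
  qed
  have margin: "(1 - c) * d \<le> d - (M *v (c *\<^sub>R z)) $ i" if "(M *v z) $ i \<le> d" "0 < d"
    for M :: "real^'a^'b" and z d i
    using mult_left_mono[OF that(1), of c] c(1) by (simp add: matrix_vector_mult_scaleR algebra_simps)
  show ?thesis
  proof (rule that)
    show "V \<in> seqs N" by (simp add: V_def seqs_def)
    show "traj A B V x N = 0" using traj_V[of N] U(3) by simp
    fix k assume "k < N"
    show "(\<eta>/(1+\<eta>)) * dx $ i \<le> dx $ i - (Cx *v traj A B V x k) $ i" for i
      using U(2) \<open>k < N\<close> margin assms(3) unfolding traj_V[OF less_imp_le[OF \<open>k < N\<close>]] polyh_def c(3)
      by blast
    show "(\<eta>/(1+\<eta>)) * du $ j \<le> du $ j - (Cu *v V k) $ j" for j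
      using U(1) \<open>k < N\<close> margin[of Cu "U k" j "du $ j"] assms(4) unfolding V_def polyh_def c(3) by simp
  qed
qed

section \<open>Closed-loop constraint satisfaction\<close>

lemma Kinf_linear: "c > 0 \<Longrightarrow> Kinf (\<lambda>t. c * t)"
  unfolding Kinf_def
  by (auto intro!: continuous_intros strict_mono_onI filterlim_tendsto_pos_mult_at_top[OF tendsto_const]
      filterlim_ident)

lemma exists_pos_le_components:
  fixes d :: "real^'q" assumes "\<forall>i. 0 < d $ i"
  obtains m where "m > 0" "\<And>i. m \<le> d $ i"
proof
  show "Min (range (($) d)) > 0" using Min_in[of "range (($) d)"] assms by auto
  show "Min (range (($) d)) \<le> d $ i" for i by simp
qed

locale relaxed_barrier_mpc =
  fixes A :: "real^'n^'n" and B :: "real^'m^'n"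
    and Cx :: "real^'n^'qx" and dx wx :: "real^'qx"
    and Cu :: "real^'m^'qu" and du wu :: "real^'qu"
    and N :: nat and \<epsilon> :: real and Q :: "real^'n^'n" and R :: "real^'m^'m"
    and P :: "real \<Rightarrow> real^'n^'n"
    and kf :: "real \<Rightarrow> (nat \<Rightarrow> real^'m) \<Rightarrow> real^'n \<Rightarrow> real^'m"
    and Psio :: "real \<Rightarrow> (nat \<Rightarrow> real^'m) \<Rightarrow> real^'n \<Rightarrow> (nat \<Rightarrow> real^'m)"
  assumes N_pos: "N \<ge> 1"
    and X_compact: "compact (polyh Cx dx)" and U_compact: "compact (polyh Cu du)"
    and dx_pos: "\<forall>i. dx $ i > 0" and du_pos: "\<forall>j. du $ j > 0"
    and eps_pos: "\<epsilon> > 0" and Q_psd: "psd Q" and R_pd: "pd R"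
    and wx_nonneg: "\<forall>i. wx $ i \<ge> 0" and wu_nonneg: "\<forall>j. wu $ j \<ge> 0"
    and wx_center: "transpose Cx *v (\<chi> i. (1 + wx $ i) / dx $ i) = 0"
    and wu_center: "transpose Cu *v (\<chi> i. (1 + wu $ i) / du $ i) = 0"
    and P_riccati: "\<And>\<delta>. 0 < \<delta> \<Longrightarrow> (\<forall>i. \<delta> \<le> dx $ i) \<Longrightarrow> (\<forall>j. \<delta> \<le> du $ j) \<Longrightarrow>
        pd (P \<delta>) \<and>
        (let K = gainK A B R \<epsilon> (Mmat \<delta> Cu wu) (P \<delta>) in
          P \<delta> = transpose (A + B ** K) ** P \<delta> ** (A + B ** K)
                + transpose K ** (R + \<epsilon> *\<^sub>R Mmat \<delta> Cu wu) ** K + Q + \<epsilon> *\<^sub>R Mmat \<delta> Cx wx)"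
    and shift_descent: "\<And>\<delta> U x. 0 < \<delta> \<Longrightarrow> (\<forall>i. \<delta> \<le> dx $ i) \<Longrightarrow> (\<forall>j. \<delta> \<le> du $ j) \<Longrightarrow>
        U \<in> seqs N \<Longrightarrow>
        cost_N A B N (stage_cost \<delta> \<epsilon> Q R Cx dx wx Cu du wu) (P \<delta>) (shiftop N (kf \<delta>) U x) (A *v x + B *v U 0)
        \<le> cost_N A B N (stage_cost \<delta> \<epsilon> Q R Cx dx wx Cu du wu) (P \<delta>) U x"
    and update_seqs: "\<And>\<delta> U x. 0 < \<delta> \<Longrightarrow> (\<forall>i. \<delta> \<le> dx $ i) \<Longrightarrow> (\<forall>j. \<delta> \<le> du $ j) \<Longrightarrow>
        U \<in> seqs N \<Longrightarrow> Psio \<delta> U x \<in> seqs N"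
    and update_descent: "\<And>\<delta> U x. 0 < \<delta> \<Longrightarrow> (\<forall>i. \<delta> \<le> dx $ i) \<Longrightarrow> (\<forall>j. \<delta> \<le> du $ j) \<Longrightarrow>
        U \<in> seqs N \<Longrightarrow>
        cost_N A B N (stage_cost \<delta> \<epsilon> Q R Cx dx wx Cu du wu) (P \<delta>) (Psio \<delta> U x) x
        \<le> cost_N A B N (stage_cost \<delta> \<epsilon> Q R Cx dx wx Cu du wu) (P \<delta>) U x"
begin

definition admissible :: "real \<Rightarrow> bool" where
  "admissible \<delta> \<longleftrightarrow> 0 < \<delta> \<and> (\<forall>i. \<delta> \<le> dx $ i) \<and> (\<forall>j. \<delta> \<le> du $ j)"

abbreviation stage :: "real \<Rightarrow> real^'n \<Rightarrow> real^'m \<Rightarrow> real" where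
  "stage \<delta> \<equiv> stage_cost \<delta> \<epsilon> Q R Cx dx wx Cu du wu"

abbreviation cost :: "real \<Rightarrow> (nat \<Rightarrow> real^'m) \<Rightarrow> real^'n \<Rightarrow> real" where
  "cost \<delta> \<equiv> cost_N A B N (stage \<delta>) (P \<delta>)"

abbreviation optimum :: "real \<Rightarrow> real^'n \<Rightarrow> nat \<Rightarrow> real^'m" where
  "optimum \<delta> x \<equiv> THE U. U \<in> seqs N \<and> (\<forall>V\<in>seqs N. cost \<delta> U x \<le> cost \<delta> V x)"

lemma admissibleD:
  assumes "admissible \<delta>" shows "0 < \<delta>" "\<forall>i. \<delta> \<le> dx $ i" "\<forall>j. \<delta> \<le> du $ j"
  using assms unfolding admissible_def by auto

lemma stage_ge:
  assumes "admissible \<delta>"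
  shows "\<epsilon> * recbar \<delta> Cx dx wx x \<le> stage \<delta> x u" "\<epsilon> * recbar \<delta> Cu du wu u \<le> stage \<delta> x u"
    "quad_form R u \<le> stage \<delta> x u" "0 \<le> stage \<delta> x u"
  using stage_cost_ge[OF admissibleD[OF assms] wx_nonneg wu_nonneg wx_center wu_center Q_psd R_pd eps_pos]
  by blast+

lemma P_pd: "admissible \<delta> \<Longrightarrow> pd (P \<delta>)"
  using P_riccati admissibleD by blast

lemma cost_ge_stage: "admissible \<delta> \<Longrightarrow> k < N \<Longrightarrow> stage \<delta> (traj A B U x k) (U k) \<le> cost \<delta> U x"
  by (intro cost_N_ge_stage stage_ge(4) pd_quad_form_nonneg[OF P_pd])

lemma optimum_minimizes:
  assumes "admissible \<delta>"
  shows "optimum \<delta> x \<in> seqs N \<and> (\<forall>V\<in>seqs N. cost \<delta> (optimum \<delta> x) x \<le> cost \<delta> V x)"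
proof (rule theI'[of "\<lambda>U. U \<in> seqs N \<and> (\<forall>V\<in>seqs N. cost \<delta> U x \<le> cost \<delta> V x)"])
  show "\<exists>!U. U \<in> seqs N \<and> (\<forall>V\<in>seqs N. cost \<delta> U x \<le> cost \<delta> V x)"
  proof (rule exists_unique_minimizer_seqs[OF R_pd, where F = "\<lambda>U. cost \<delta> U x"])
    show "continuous_on UNIV (\<lambda>U. cost \<delta> U x)"
      using continuous_on_cost_N admissibleD(1)[OF assms] by blast
    show "quad_form R (U k) \<le> cost \<delta> U x" if "U \<in> seqs N" "k < N" for U k
      using stage_ge(3)[OF assms] cost_ge_stage[OF assms that(2)] order_trans by blast
    show "cost \<delta> (\<lambda>k. (1/2) *\<^sub>R (U k + V k)) x \<le> (cost \<delta> U x + cost \<delta> V x)/2 - (\<Sum>k<N. quad_form R (U k - V k))/4"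
      if "U \<in> seqs N" "V \<in> seqs N" for U V
      by (rule cost_midpoint[OF admissibleD(1)[OF assms] less_imp_le[OF eps_pos] wx_nonneg wu_nonneg Q_psd
          pd_quad_form_nonneg[OF P_pd[OF assms]]])
  qed
qed

lemma closed_loop_cost_le:
  assumes "admissible \<delta>" "U0 \<in> seqs N" "closed_loop A B N (kf \<delta>) (Psio \<delta>) iT x0 U0 k = (x, U)"
  shows "U \<in> seqs N \<and> cost \<delta> U x \<le> cost \<delta> U0 x0"
  using closed_loop_descent[where J = "cost \<delta>", OF _ _ assms(2,3)]
    shift_descent update_seqs update_descent admissibleD[OF assms(1)] by blast

lemma constraints_of_cost_le:
  assumes "admissible \<delta>" "cost \<delta> U x \<le> \<beta>"
    and small: "\<forall>i. \<delta> \<le> dx $ i * exp (- (\<beta>/\<epsilon>))" "\<forall>j. \<delta> \<le> du $ j * exp (- (\<beta>/\<epsilon>))"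
  shows "x \<in> polyh Cx dx \<and> U 0 \<in> polyh Cu du"
proof -
  have "stage \<delta> x (U 0) \<le> \<beta>"
    using cost_ge_stage[OF assms(1), where k=0 and U=U and x=x] N_pos assms(2) by simp
  then have "recbar \<delta> Cx dx wx x \<le> \<beta>/\<epsilon>" "recbar \<delta> Cu du wu (U 0) \<le> \<beta>/\<epsilon>"
    using stage_ge(1,2)[OF assms(1), where x=x and u="U 0"] eps_pos by (simp_all add: field_simps)
  then show ?thesis
    using polyh_of_recbar_le[OF admissibleD(1,2)[OF assms(1)] wx_nonneg wx_center small(1)]
      polyh_of_recbar_le[OF admissibleD(1,3)[OF assms(1)] wu_nonneg wu_center small(2)]
    by simp
qed

lemma bellman_inequality:
  assumes "admissible \<delta>"
  shows "quad_form (P \<delta>) x \<le> quad_form (P \<delta>) (A *v x + B *v u)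
           + quad_form (Q + \<epsilon> *\<^sub>R Mmat \<delta> Cx wx) x + quad_form (R + \<epsilon> *\<^sub>R Mmat \<delta> Cu wu) u"
proof (rule riccati_bellman_inequality)
  let ?Rt = "R + \<epsilon> *\<^sub>R Mmat \<delta> Cu wu"
  have P_nonneg: "0 \<le> quad_form (P \<delta>) z" for z using pd_quad_form_nonneg[OF P_pd[OF assms]] .
  have Rt_pos: "0 < quad_form ?Rt z" if "z \<noteq> 0" for z
    using pd_quad_form_pos[OF R_pd that] quad_form_Mmat_nonneg[OF wu_nonneg, of \<delta> Cu z] eps_pos
    unfolding quad_form_add_matrix quad_form_scaleR_matrix by (simp add: add_pos_nonneg)
  show "transpose (P \<delta>) = P \<delta>" using P_pd[OF assms] unfolding pd_def by blast
  show "0 \<le> quad_form (P \<delta>) z" for z by (rule P_nonneg)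
  show "transpose ?Rt = ?Rt"
    using R_pd by (simp add: pd_def transpose_add transpose_scalar transpose_Mmat)
  show "0 \<le> quad_form ?Rt z" for z using Rt_pos[of z] by (cases "z = 0") (auto simp: quad_form_def)
  show "invertible (R + transpose B ** P \<delta> ** B + \<epsilon> *\<^sub>R Mmat \<delta> Cu wu)"
  proof (rule invertible_of_quad_form_pos)
    fix z :: "real^'m" assume "z \<noteq> 0"
    then show "0 < quad_form (R + transpose B ** P \<delta> ** B + \<epsilon> *\<^sub>R Mmat \<delta> Cu wu) z"
      using Rt_pos[of z] P_nonneg[of "B *v z"]
      unfolding quad_form_add_matrix quad_form_transpose_mult quad_form_scaleR_matrix by linarith
  qed
  show "P \<delta> = transpose (A + B ** gainK A B R \<epsilon> (Mmat \<delta> Cu wu) (P \<delta>)) ** P \<delta> ** (A + B ** gainK A B R \<epsilon> (Mmat \<delta> Cu wu) (P \<delta>))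
      + transpose (gainK A B R \<epsilon> (Mmat \<delta> Cu wu) (P \<delta>)) ** ?Rt ** gainK A B R \<epsilon> (Mmat \<delta> Cu wu) (P \<delta>)
      + (Q + \<epsilon> *\<^sub>R Mmat \<delta> Cx wx)"
    using P_riccati admissibleD[OF assms] by (simp add: Let_def add.assoc)
qed

lemma bounded_polytopes:
  obtains Xmax Umax where "Xmax \<ge> 0" "Umax \<ge> 0"
    "\<And>z. z \<in> polyh Cx dx \<Longrightarrow> norm z \<le> Xmax" "\<And>v. v \<in> polyh Cu du \<Longrightarrow> norm v \<le> Umax"
  using compact_imp_bounded[OF X_compact] compact_imp_bounded[OF U_compact]
  unfolding bounded_pos by (meson less_imp_le)

lemma terminal_weight_bound:
  assumes "ball p e \<subseteq> feasible_set A B Cx dx Cu du N" "e > 0"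
  obtains \<kappa> where "\<kappa> \<ge> 0"
    "\<And>\<delta> z. admissible \<delta> \<Longrightarrow> \<delta> \<le> 1 \<Longrightarrow> quad_form (P \<delta>) z \<le> \<kappa> / \<delta>\<^sup>2 * (norm z)\<^sup>2"
proof -
  obtain a where a: "a \<ge> 0"
    "\<And>\<delta> z. 0 < \<delta> \<Longrightarrow> \<delta> \<le> 1 \<Longrightarrow> quad_form (Q + \<epsilon> *\<^sub>R Mmat \<delta> Cx wx) z \<le> a / \<delta>\<^sup>2 * (norm z)\<^sup>2"
    using quad_form_add_Mmat_le[OF wx_nonneg, of \<epsilon> Q] eps_pos by auto
  obtain b where b: "b \<ge> 0"
    "\<And>\<delta> z. 0 < \<delta> \<Longrightarrow> \<delta> \<le> 1 \<Longrightarrow> quad_form (R + \<epsilon> *\<^sub>R Mmat \<delta> Cu wu) z \<le> b / \<delta>\<^sup>2 * (norm z)\<^sup>2"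
    using quad_form_add_Mmat_le[OF wu_nonneg, of \<epsilon> R] eps_pos by auto
  obtain Xmax Umax where bounds: "Xmax \<ge> 0" "Umax \<ge> 0"
    "\<And>z. z \<in> polyh Cx dx \<Longrightarrow> norm z \<le> Xmax" "\<And>v. v \<in> polyh Cu du \<Longrightarrow> norm v \<le> Umax"
    using bounded_polytopes by blast
  define \<kappa> where "\<kappa> = real N * (a * (4*Xmax/e)\<^sup>2 + b * (4*Umax/e)\<^sup>2)"
  show ?thesis
  proof
    show "\<kappa> \<ge> 0" unfolding \<kappa>_def using a(1) b(1) by simp
    fix \<delta> z assume \<delta>: "admissible \<delta>" "\<delta> \<le> 1"
    have "quad_form (P \<delta>) z \<le> real N * (a / \<delta>\<^sup>2 * (4*Xmax/e)\<^sup>2 + b / \<delta>\<^sup>2 * (4*Umax/e)\<^sup>2) * (norm z)\<^sup>2"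
      using quad_form_le_of_steering[OF bellman_inequality[OF \<delta>(1)] a(2) b(2) _ _ assms bounds(3,4,1,2)]
        admissibleD(1)[OF \<delta>(1)] \<delta>(2) a(1) b(1) by simp
    also have "\<dots> = \<kappa> / \<delta>\<^sup>2 * (norm z)\<^sup>2"
      using admissibleD(1)[OF \<delta>(1)] by (simp add: \<kappa>_def field_simps)
    finally show "quad_form (P \<delta>) z \<le> \<kappa> / \<delta>\<^sup>2 * (norm z)\<^sup>2" .
  qed
qed

text \<open>At the minimiser \<open>T\<close>, \<open>J(T + D) + J(T - D) \<le> 2 J(T) + O(\<parallel>D\<parallel>\<^sup>2/\<delta>\<^sup>2)\<close> and \<open>J(T - D) \<ge> J(T)\<close>.\<close>
lemma cost_le_optimum_plus:
  assumes P_le: "\<And>\<delta> z. admissible \<delta> \<Longrightarrow> \<delta> \<le> 1 \<Longrightarrow> quad_form (P \<delta>) z \<le> \<kappa> / \<delta>\<^sup>2 * (norm z)\<^sup>2"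
    and "\<kappa> \<ge> 0"
  obtains c where "c \<ge> 0"
    "\<And>\<delta> x U. admissible \<delta> \<Longrightarrow> \<delta> \<le> 1 \<Longrightarrow> U \<in> seqs N \<Longrightarrow>
       cost \<delta> U x \<le> cost \<delta> (optimum \<delta> x) x + c / \<delta>\<^sup>2 * (seq_norm N (\<lambda>k. U k - optimum \<delta> x k))\<^sup>2"
proof -
  obtain a where a: "a \<ge> 0"
    "\<And>\<delta> z. 0 < \<delta> \<Longrightarrow> \<delta> \<le> 1 \<Longrightarrow> quad_form (Q + (2*\<epsilon>) *\<^sub>R Mmat \<delta> Cx wx) z \<le> a / \<delta>\<^sup>2 * (norm z)\<^sup>2"
    using quad_form_add_Mmat_le[OF wx_nonneg, of "2*\<epsilon>" Q] eps_pos by auto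
  obtain b where b: "b \<ge> 0"
    "\<And>\<delta> z. 0 < \<delta> \<Longrightarrow> \<delta> \<le> 1 \<Longrightarrow> quad_form (R + (2*\<epsilon>) *\<^sub>R Mmat \<delta> Cu wu) z \<le> b / \<delta>\<^sup>2 * (norm z)\<^sup>2"
    using quad_form_add_Mmat_le[OF wu_nonneg, of "2*\<epsilon>" R] eps_pos by auto
  obtain L where L: "L \<ge> 0" "\<And>U k. k \<le> N \<Longrightarrow> norm (traj A B U 0 k) \<le> L * seq_norm N U"
    using traj_norm_le_seq_norm[of N A B] by blast
  define c where "c = 2 * (real N * (a * L\<^sup>2 + b) + \<kappa> * L\<^sup>2)"
  show ?thesis
  proof
    show "c \<ge> 0" unfolding c_def using a(1) b(1) \<open>\<kappa> \<ge> 0\<close> by simp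
    fix \<delta> and x :: "real^'n" and U :: "nat \<Rightarrow> real^'m"
    assume \<delta>: "admissible \<delta>" "\<delta> \<le> 1" and U: "U \<in> seqs N"
    define T where "T = optimum \<delta> x"
    define D where "D = (\<lambda>k. U k - T k)"
    have T: "T \<in> seqs N" "\<And>V. V \<in> seqs N \<Longrightarrow> cost \<delta> T x \<le> cost \<delta> V x"
      using optimum_minimizes[OF \<delta>(1)] unfolding T_def by blast+
    let ?quad = "cost_N A B N (\<lambda>h e. quad_form (Q + (2*\<epsilon>) *\<^sub>R Mmat \<delta> Cx wx) h
                                  + quad_form (R + (2*\<epsilon>) *\<^sub>R Mmat \<delta> Cu wu) e) (P \<delta>) D 0"
    have "cost \<delta> T x \<le> cost \<delta> (\<lambda>k. T k - D k) x" using T U by (intro T(2)) (simp add: seqs_def D_def)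
    moreover have "cost \<delta> (\<lambda>k. T k + D k) x + cost \<delta> (\<lambda>k. T k - D k) x \<le> 2 * cost \<delta> T x + 2 * ?quad"
      by (rule cost_second_difference[OF admissibleD(1)[OF \<delta>(1)] less_imp_le[OF eps_pos] wx_nonneg wu_nonneg])
    moreover have "(\<lambda>k. T k + D k) = U" by (simp add: D_def)
    moreover have "?quad \<le> (real N * (a / \<delta>\<^sup>2 * L\<^sup>2 + b / \<delta>\<^sup>2) + \<kappa> / \<delta>\<^sup>2 * L\<^sup>2) * (seq_norm N D)\<^sup>2"
      using quadratic_cost_le[OF L(2,1) a(2) b(2) P_le[OF \<delta>]] admissibleD(1)[OF \<delta>(1)] \<delta>(2) a(1) b(1) \<open>\<kappa> \<ge> 0\<close>
      by simp
    moreover have "real N * (a / \<delta>\<^sup>2 * L\<^sup>2 + b / \<delta>\<^sup>2) + \<kappa> / \<delta>\<^sup>2 * L\<^sup>2 = c / 2 / \<delta>\<^sup>2"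
      using admissibleD(1)[OF \<delta>(1)] by (simp add: c_def field_simps)
    ultimately have "cost \<delta> U x \<le> cost \<delta> T x + 2 * (c / 2 / \<delta>\<^sup>2 * (seq_norm N D)\<^sup>2)" by simp
    then show "cost \<delta> U x \<le> cost \<delta> T x + c / \<delta>\<^sup>2 * (seq_norm N D)\<^sup>2" by simp
  qed
qed

lemma stage_le_of_margin:
  assumes "admissible \<delta>" "\<theta> > 0" "\<forall>i. \<delta> \<le> \<theta> * dx $ i" "\<forall>j. \<delta> \<le> \<theta> * du $ j"
    and x_margin: "\<forall>i. \<theta> * dx $ i \<le> dx $ i - (Cx *v x) $ i"
    and u_margin: "\<forall>j. \<theta> * du $ j \<le> du $ j - (Cu *v u) $ j"
    and "\<forall>z\<in>polyh Cx dx. quad_form Q z \<le> qx" "\<forall>v\<in>polyh Cu du. quad_form R v \<le> qu"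
  shows "stage \<delta> x u \<le> qx + qu + \<epsilon> * ((\<Sum>i\<in>UNIV. 1 + wx $ i) * - ln \<theta>) + \<epsilon> * ((\<Sum>j\<in>UNIV. 1 + wu $ j) * - ln \<theta>)"
proof -
  have "(Cx *v x) $ i \<le> dx $ i" for i
    using x_margin[rule_format, of i] mult_pos_pos[OF assms(2) dx_pos[rule_format, of i]] by linarith
  moreover have "(Cu *v u) $ j \<le> du $ j" for j
    using u_margin[rule_format, of j] mult_pos_pos[OF assms(2) du_pos[rule_format, of j]] by linarith
  ultimately have "quad_form Q x \<le> qx" "quad_form R u \<le> qu"
    using assms(7,8) unfolding polyh_def by auto
  moreover have "\<epsilon> * recbar \<delta> Cx dx wx x \<le> \<epsilon> * ((\<Sum>i\<in>UNIV. 1 + wx $ i) * - ln \<theta>)"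
    by (rule mult_left_mono[OF recbar_le_of_margin[OF admissibleD(1)[OF assms(1)] assms(2,3) wx_nonneg x_margin]])
      (use eps_pos in auto)
  moreover have "\<epsilon> * recbar \<delta> Cu du wu u \<le> \<epsilon> * ((\<Sum>j\<in>UNIV. 1 + wu $ j) * - ln \<theta>)"
    by (rule mult_left_mono[OF recbar_le_of_margin[OF admissibleD(1)[OF assms(1)] assms(2,4) wu_nonneg u_margin]])
      (use eps_pos in auto)
  ultimately show ?thesis unfolding stage_cost_eq by linarith
qed

text \<open>Inputs keeping all constraints a fraction \<open>\<theta>\<close> inside the polytopes, obtained from a scaled-up
  initial state, have barrier cost at most \<open>- ln \<theta>\<close> per constraint, independently of \<open>\<delta>\<close>.\<close>
lemma optimal_cost_bound:
  assumes "compact X0" "X0 \<subseteq> interior (feasible_set A B Cx dx Cu du N)"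
  obtains \<beta> \<theta> where "\<theta> > 0"
    "\<And>\<delta> x0. admissible \<delta> \<Longrightarrow> \<forall>i. \<delta> \<le> \<theta> * dx $ i \<Longrightarrow> \<forall>j. \<delta> \<le> \<theta> * du $ j \<Longrightarrow> x0 \<in> X0 \<Longrightarrow>
       cost \<delta> (optimum \<delta> x0) x0 \<le> \<beta>"
proof -
  obtain e where e: "e > 0" "(\<Union>x\<in>X0. ball x e) \<subseteq> interior (feasible_set A B Cx dx Cu du N)"
    using compact_subset_open_imp_ball_epsilon_subset[OF assms(1) open_interior assms(2)] by blast
  obtain r where r: "r > 0" "\<And>x. x \<in> X0 \<Longrightarrow> norm x \<le> r"
    using compact_imp_bounded[OF assms(1)] unfolding bounded_pos by blast
  define \<eta> where "\<eta> = e / (2 * r)"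
  have \<eta>: "\<eta> > 0" using e r by (simp add: \<eta>_def)
  have scaled_feasible: "(1 + \<eta>) *\<^sub>R x \<in> feasible_set A B Cx dx Cu du N" if "x \<in> X0" for x
  proof -
    have "dist x ((1 + \<eta>) *\<^sub>R x) = \<eta> * norm x" using \<eta> by (simp add: dist_norm algebra_simps)
    also have "\<dots> < e" using r(2)[OF that] \<eta> e r by (simp add: \<eta>_def field_simps)
    finally show ?thesis using e(2) that interior_subset by fastforce
  qed
  have "bounded (quad_form Q ` polyh Cx dx)" "bounded (quad_form R ` polyh Cu du)"
    by (intro compact_imp_bounded compact_continuous_image X_compact U_compact continuous_intros)+
  then obtain qx qu where "\<forall>y\<in>quad_form Q ` polyh Cx dx. \<bar>y\<bar> \<le> qx" "\<forall>y\<in>quad_form R ` polyh Cu du. \<bar>y\<bar> \<le> qu"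
    unfolding bounded_real by blast
  then have qx: "\<forall>z\<in>polyh Cx dx. quad_form Q z \<le> qx" and qu: "\<forall>v\<in>polyh Cu du. quad_form R v \<le> qu"
    by (simp_all add: abs_le_iff)
  define \<theta> where "\<theta> = \<eta> / (1 + \<eta>)"
  define s where "s = qx + qu + \<epsilon> * ((\<Sum>i\<in>UNIV. 1 + wx $ i) * - ln \<theta>) + \<epsilon> * ((\<Sum>j\<in>UNIV. 1 + wu $ j) * - ln \<theta>)"
  show ?thesis
  proof
    show "\<theta> > 0" using \<eta> by (simp add: \<theta>_def)
    fix \<delta> x0 assume \<delta>: "admissible \<delta>" "\<forall>i. \<delta> \<le> \<theta> * dx $ i" "\<forall>j. \<delta> \<le> \<theta> * du $ j" and "x0 \<in> X0"
    obtain V where V: "V \<in> seqs N" "traj A B V x0 N = 0"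
      "\<And>k i. k < N \<Longrightarrow> \<theta> * dx $ i \<le> dx $ i - (Cx *v traj A B V x0 k) $ i"
      "\<And>k j. k < N \<Longrightarrow> \<theta> * du $ j \<le> du $ j - (Cu *v V k) $ j"
      using feasible_with_margin[OF scaled_feasible[OF \<open>x0 \<in> X0\<close>] \<eta> dx_pos du_pos] unfolding \<theta>_def by blast
    have "cost \<delta> (optimum \<delta> x0) x0 \<le> cost \<delta> V x0" using optimum_minimizes[OF \<delta>(1)] V(1) by blast
    also have "\<dots> = (\<Sum>k<N. stage \<delta> (traj A B V x0 k) (V k))" using V(2) by (simp add: cost_N_eq quad_form_def)
    also have "\<dots> \<le> real N * s"
    proof -
      have "stage \<delta> (traj A B V x0 k) (V k) \<le> s" if "k < N" for k
        unfolding s_def using V(3,4)[OF that]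
        by (intro stage_le_of_margin[OF \<delta>(1) \<open>\<theta> > 0\<close> \<delta>(2,3) _ _ qx qu]) auto
      then show ?thesis using sum_mono[of "{..<N}" _ "\<lambda>_. s"] by simp
    qed
    finally show "cost \<delta> (optimum \<delta> x0) x0 \<le> real N * s" .
  qed
qed

lemma exists_small_relaxation:
  assumes "\<theta> > 0"
  obtains \<delta>0 where "\<delta>0 > 0" "\<And>\<delta>. 0 < \<delta> \<Longrightarrow> \<delta> \<le> \<delta>0 \<Longrightarrow>
    admissible \<delta> \<and> \<delta> \<le> 1 \<and> (\<forall>i. \<delta> \<le> \<theta> * dx $ i) \<and> (\<forall>j. \<delta> \<le> \<theta> * du $ j)
    \<and> (\<forall>i. \<delta> \<le> dx $ i * exp (- b)) \<and> (\<forall>j. \<delta> \<le> du $ j * exp (- b))"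
proof -
  obtain mx where mx: "mx > 0" "\<And>i. mx \<le> dx $ i" using exists_pos_le_components[OF dx_pos] by blast
  obtain mu where mu: "mu > 0" "\<And>j. mu \<le> du $ j" using exists_pos_le_components[OF du_pos] by blast
  define m where "m = min mx mu"
  define \<gamma> where "\<gamma> = min \<theta> (min 1 (exp (- b)))"
  have "m > 0" "\<gamma> > 0" using mx mu assms by (simp_all add: m_def \<gamma>_def)
  have m_le: "m \<le> dx $ i" "m \<le> du $ j" for i j
    using mx(2) mu(2) by (simp_all add: m_def min.coboundedI1 min.coboundedI2)
  have \<gamma>_le: "\<gamma> \<le> \<theta>" "\<gamma> \<le> 1" "\<gamma> \<le> exp (- b)" by (simp_all add: \<gamma>_def)
  show ?thesis
  proof
    show "min 1 (m * \<gamma>) > 0" using \<open>m > 0\<close> \<open>\<gamma> > 0\<close> by simp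
    fix \<delta> assume \<delta>: "0 < \<delta>" "\<delta> \<le> min 1 (m * \<gamma>)"
    have scaled: "\<delta> \<le> t * d" if "m \<le> d" "\<gamma> \<le> t" for d t
    proof -
      have "\<delta> \<le> m * \<gamma>" using \<delta>(2) by simp
      also have "\<dots> \<le> t * d" unfolding mult.commute[of t] using that \<open>m > 0\<close> \<open>\<gamma> > 0\<close> by (intro mult_mono) auto
      finally show ?thesis .
    qed
    show "admissible \<delta> \<and> \<delta> \<le> 1 \<and> (\<forall>i. \<delta> \<le> \<theta> * dx $ i) \<and> (\<forall>j. \<delta> \<le> \<theta> * du $ j)
      \<and> (\<forall>i. \<delta> \<le> dx $ i * exp (- b)) \<and> (\<forall>j. \<delta> \<le> du $ j * exp (- b))"
      using \<delta> scaled[OF m_le(1) \<gamma>_le(1)] scaled[OF m_le(2) \<gamma>_le(1)]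
        scaled[OF m_le(1) \<gamma>_le(3)] scaled[OF m_le(2) \<gamma>_le(3)]
        scaled[OF m_le(1) \<gamma>_le(2)] scaled[OF m_le(2) \<gamma>_le(2)]
      unfolding admissible_def by (simp add: mult.commute)
  qed
qed

lemma closed_loop_constraints:
  assumes "compact X0" "X0 \<subseteq> interior (feasible_set A B Cx dx Cu du N)"
  obtains \<delta>0 \<mu> where "\<delta>0 > 0" "Kinf \<mu>"
    "\<And>\<delta> x0 U0 iT k x U. 0 < \<delta> \<Longrightarrow> \<delta> \<le> \<delta>0 \<Longrightarrow> x0 \<in> X0 \<Longrightarrow> U0 \<in> seqs N \<Longrightarrow>
       seq_norm N (\<lambda>k. U0 k - optimum \<delta> x0 k) \<le> \<mu> \<delta> \<Longrightarrow>
       closed_loop A B N (kf \<delta>) (Psio \<delta>) iT x0 U0 k = (x, U) \<Longrightarrow>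
       x \<in> polyh Cx dx \<and> U 0 \<in> polyh Cu du"
proof (cases "X0 = {}")
  case True
  show ?thesis by (rule that[of 1 "\<lambda>t. 1 * t"]) (use True Kinf_linear[of 1] in auto)
next
  case False
  then obtain p where "p \<in> interior (feasible_set A B Cx dx Cu du N)" using assms(2) by blast
  then obtain e where e: "ball p e \<subseteq> feasible_set A B Cx dx Cu du N" "e > 0"
    by (auto simp: mem_interior)
  obtain \<kappa> where \<kappa>: "\<kappa> \<ge> 0" "\<And>\<delta> z. admissible \<delta> \<Longrightarrow> \<delta> \<le> 1 \<Longrightarrow> quad_form (P \<delta>) z \<le> \<kappa> / \<delta>\<^sup>2 * (norm z)\<^sup>2"
    using terminal_weight_bound[OF e] by blast
  obtain c where c: "c \<ge> 0"
    "\<And>\<delta> x U. admissible \<delta> \<Longrightarrow> \<delta> \<le> 1 \<Longrightarrow> U \<in> seqs N \<Longrightarrow>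
       cost \<delta> U x \<le> cost \<delta> (optimum \<delta> x) x + c / \<delta>\<^sup>2 * (seq_norm N (\<lambda>k. U k - optimum \<delta> x k))\<^sup>2"
    using cost_le_optimum_plus[OF \<kappa>(2,1)] by blast
  obtain \<beta> \<theta> where \<theta>: "\<theta> > 0" and \<beta>:
    "\<And>\<delta> x0. admissible \<delta> \<Longrightarrow> \<forall>i. \<delta> \<le> \<theta> * dx $ i \<Longrightarrow> \<forall>j. \<delta> \<le> \<theta> * du $ j \<Longrightarrow> x0 \<in> X0 \<Longrightarrow>
       cost \<delta> (optimum \<delta> x0) x0 \<le> \<beta>"
    by (rule optimal_cost_bound[OF assms]) (rule that)
  obtain \<delta>0 where "\<delta>0 > 0" and small: "\<And>\<delta>. 0 < \<delta> \<Longrightarrow> \<delta> \<le> \<delta>0 \<Longrightarrow>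
    admissible \<delta> \<and> \<delta> \<le> 1 \<and> (\<forall>i. \<delta> \<le> \<theta> * dx $ i) \<and> (\<forall>j. \<delta> \<le> \<theta> * du $ j)
    \<and> (\<forall>i. \<delta> \<le> dx $ i * exp (- ((\<beta> + 1)/\<epsilon>))) \<and> (\<forall>j. \<delta> \<le> du $ j * exp (- ((\<beta> + 1)/\<epsilon>)))"
    by (rule exists_small_relaxation[OF \<theta>]) (rule that)
  show ?thesis
  proof
    show "\<delta>0 > 0" by fact
    show "Kinf (\<lambda>t. (1 / (1 + c)) * t)" using c(1) by (intro Kinf_linear) simp
    fix \<delta> x0 U0 iT k x U
    assume \<delta>: "0 < \<delta>" "\<delta> \<le> \<delta>0" and "x0 \<in> X0" "U0 \<in> seqs N"
      and close: "seq_norm N (\<lambda>k. U0 k - optimum \<delta> x0 k) \<le> (1 / (1 + c)) * \<delta>"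
      and loop: "closed_loop A B N (kf \<delta>) (Psio \<delta>) iT x0 U0 k = (x, U)"
    note below = small[OF \<delta>, THEN conjunct1] small[OF \<delta>, THEN conjunct2]
    have "c / \<delta>\<^sup>2 * (seq_norm N (\<lambda>k. U0 k - optimum \<delta> x0 k))\<^sup>2 \<le> c / \<delta>\<^sup>2 * ((1 / (1 + c)) * \<delta>)\<^sup>2"
      using close seq_norm_nonneg c(1) by (intro mult_left_mono power_mono) auto
    also have "\<dots> = c / (1 + c)\<^sup>2" using \<delta>(1) c(1) by (simp add: field_simps)
    also have "\<dots> \<le> 1"
    proof -
      have "c \<le> (1 + c)\<^sup>2" using c(1) by (simp add: power2_eq_square algebra_simps)
      then show ?thesis using c(1) by (simp add: pos_divide_le_eq)
    qed
    finally have "cost \<delta> U0 x0 \<le> \<beta> + 1"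
      using c(2)[of \<delta> U0 x0] \<beta>[of \<delta> x0] below \<open>U0 \<in> seqs N\<close> \<open>x0 \<in> X0\<close> by force
    then have "cost \<delta> U x \<le> \<beta> + 1" using closed_loop_cost_le[OF _ \<open>U0 \<in> seqs N\<close> loop] below by fastforce
    then show "x \<in> polyh Cx dx \<and> U 0 \<in> polyh Cu du" using constraints_of_cost_le below by blast
  qed
qed

lemma closed_loop_constraints_with_tolerance:
  assumes "compact X0" "X0 \<subseteq> interior (feasible_set A B Cx dx Cu du N)"
    and tolerances: "\<forall>i. 0 \<le> zx $ i" "\<forall>j. 0 \<le> zu $ j"
  shows "\<exists>\<delta>0>0. \<exists>\<mu>. Kinf \<mu> \<and> (\<forall>\<delta>. 0 < \<delta> \<and> \<delta> \<le> \<delta>0 \<longrightarrow> (\<forall>x0\<in>X0. \<forall>U0\<in>seqs N.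
      seq_norm N (\<lambda>k. U0 k - optimum \<delta> x0 k) \<le> \<mu> \<delta> \<longrightarrow>
      (\<forall>iT k. let (x, U) = closed_loop A B N (kf \<delta>) (Psio \<delta>) iT x0 U0 k in
         (\<forall>i. (Cx *v x) $ i \<le> dx $ i + zx $ i) \<and> (\<forall>j. (Cu *v U 0) $ j \<le> du $ j + zu $ j))))"
proof -
  obtain \<delta>0 \<mu> where "\<delta>0 > 0" "Kinf \<mu>" and safe:
    "\<And>\<delta> x0 U0 iT k x U. 0 < \<delta> \<Longrightarrow> \<delta> \<le> \<delta>0 \<Longrightarrow> x0 \<in> X0 \<Longrightarrow> U0 \<in> seqs N \<Longrightarrow>
       seq_norm N (\<lambda>k. U0 k - optimum \<delta> x0 k) \<le> \<mu> \<delta> \<Longrightarrow>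
       closed_loop A B N (kf \<delta>) (Psio \<delta>) iT x0 U0 k = (x, U) \<Longrightarrow>
       x \<in> polyh Cx dx \<and> U 0 \<in> polyh Cu du"
    by (rule closed_loop_constraints[OF assms(1,2)]) (rule that)
  show ?thesis
  proof (intro exI conjI allI impI ballI)
    fix \<delta> x0 U0 iT k
    assume "0 < \<delta> \<and> \<delta> \<le> \<delta>0" "x0 \<in> X0" "U0 \<in> seqs N" "seq_norm N (\<lambda>k. U0 k - optimum \<delta> x0 k) \<le> \<mu> \<delta>"
    moreover obtain x U where loop: "closed_loop A B N (kf \<delta>) (Psio \<delta>) iT x0 U0 k = (x, U)" by fastforce
    ultimately have "x \<in> polyh Cx dx" "U 0 \<in> polyh Cu du" using safe by blast+
    then show "let (x, U) = closed_loop A B N (kf \<delta>) (Psio \<delta>) iT x0 U0 k in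
        (\<forall>i. (Cx *v x) $ i \<le> dx $ i + zx $ i) \<and> (\<forall>j. (Cu *v U 0) $ j \<le> du $ j + zu $ j)"
      using loop tolerances unfolding polyh_def by (auto intro: add_increasing2)
  qed (fact \<open>\<delta>0 > 0\<close> \<open>Kinf \<mu>\<close>)+
qed

end

theorem theorem3:
  fixes A :: "real^'n^'n" and B :: "real^'m^'n"
    and Cx :: "real^'n^'qx" and dx :: "real^'qx" and wx :: "real^'qx"
    and Cu :: "real^'m^'qu" and du :: "real^'qu" and wu :: "real^'qu"
    and N :: nat and \<epsilon> :: real and Q :: "real^'n^'n" and R :: "real^'m^'m"
    and P :: "real \<Rightarrow> real^'n^'n"
    and kf :: "real \<Rightarrow> (nat \<Rightarrow> real^'m) \<Rightarrow> real^'n \<Rightarrow> real^'m"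
    and Psio :: "real \<Rightarrow> (nat \<Rightarrow> real^'m) \<Rightarrow> real^'n \<Rightarrow> (nat \<Rightarrow> real^'m)"
    and \<gamma> :: "real \<Rightarrow> (nat \<Rightarrow> real^'m) \<Rightarrow> real^'n \<Rightarrow> real"
  assumes N_pos: "N \<ge> 1"
    and Xcomp: "compact (polyh Cx dx)" and Ucomp: "compact (polyh Cu du)"
    and dx_pos: "\<forall>i. dx $ i > 0" and du_pos: "\<forall>i. du $ i > 0"
    and eps_pos: "\<epsilon> > 0" and Q_psd: "psd Q" and R_pd: "pd R"
    and wx_nonneg: "\<forall>i. wx $ i \<ge> 0" and wu_nonneg: "\<forall>i. wu $ i \<ge> 0"
    and wx_center: "transpose Cx *v (\<chi> i. (1 + wx $ i) / dx $ i) = 0"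
    and wu_center: "transpose Cu *v (\<chi> i. (1 + wu $ i) / du $ i) = 0"
    and ctrb: "controllable A B"
    and P_ric: "\<And>\<delta>. 0 < \<delta> \<Longrightarrow> (\<forall>i. \<delta> \<le> dx $ i) \<Longrightarrow> (\<forall>j. \<delta> \<le> du $ j) \<Longrightarrow>
        pd (P \<delta>) \<and>
        (let K = gainK A B R \<epsilon> (Mmat \<delta> Cu wu) (P \<delta>) in
          P \<delta> = transpose (A + B ** K) ** P \<delta> ** (A + B ** K)
                + transpose K ** (R + \<epsilon> *\<^sub>R Mmat \<delta> Cu wu) ** K + Q + \<epsilon> *\<^sub>R Mmat \<delta> Cx wx)"
    and kf_zero: "\<And>\<delta>. 0 < \<delta> \<Longrightarrow> (\<forall>i. \<delta> \<le> dx $ i) \<Longrightarrow> (\<forall>j. \<delta> \<le> du $ j) \<Longrightarrow>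
        kf \<delta> (\<lambda>_. 0) 0 = 0"
    and kf_dec: "\<And>\<delta> U x. 0 < \<delta> \<Longrightarrow> (\<forall>i. \<delta> \<le> dx $ i) \<Longrightarrow> (\<forall>j. \<delta> \<le> du $ j) \<Longrightarrow>
        U \<in> seqs N \<Longrightarrow>
        cost_N A B N (stage_cost \<delta> \<epsilon> Q R Cx dx wx Cu du wu) (P \<delta>) (shiftop N (kf \<delta>) U x) (A *v x + B *v U 0)
        - cost_N A B N (stage_cost \<delta> \<epsilon> Q R Cx dx wx Cu du wu) (P \<delta>) U x
        \<le> - stage_cost \<delta> \<epsilon> Q R Cx dx wx Cu du wu x (U 0)"
    and Psio_seqs: "\<And>\<delta> U x. 0 < \<delta> \<Longrightarrow> (\<forall>i. \<delta> \<le> dx $ i) \<Longrightarrow> (\<forall>j. \<delta> \<le> du $ j) \<Longrightarrow>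
        U \<in> seqs N \<Longrightarrow> Psio \<delta> U x \<in> seqs N"
    and Psio_dec: "\<And>\<delta> U x. 0 < \<delta> \<Longrightarrow> (\<forall>i. \<delta> \<le> dx $ i) \<Longrightarrow> (\<forall>j. \<delta> \<le> du $ j) \<Longrightarrow>
        U \<in> seqs N \<Longrightarrow>
        cost_N A B N (stage_cost \<delta> \<epsilon> Q R Cx dx wx Cu du wu) (P \<delta>) (Psio \<delta> U x) x
        - cost_N A B N (stage_cost \<delta> \<epsilon> Q R Cx dx wx Cu du wu) (P \<delta>) U x \<le> - \<gamma> \<delta> U x"
    and gamma_nonneg: "\<And>\<delta> U x. 0 < \<delta> \<Longrightarrow> (\<forall>i. \<delta> \<le> dx $ i) \<Longrightarrow> (\<forall>j. \<delta> \<le> du $ j) \<Longrightarrow>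
        U \<in> seqs N \<Longrightarrow> \<gamma> \<delta> U x \<ge> 0"
    and gamma_zero: "\<And>\<delta> U x. 0 < \<delta> \<Longrightarrow> (\<forall>i. \<delta> \<le> dx $ i) \<Longrightarrow> (\<forall>j. \<delta> \<le> du $ j) \<Longrightarrow>
        U \<in> seqs N \<Longrightarrow>
        (\<gamma> \<delta> U x = 0 \<longleftrightarrow>
          grad_zero N (\<lambda>V. cost_N A B N (stage_cost \<delta> \<epsilon> Q R Cx dx wx Cu du wu) (P \<delta>) V x) U)"
  shows "\<forall>X0 zx zu. compact X0 \<and> X0 \<subseteq> interior (feasible_set A B Cx dx Cu du N)
           \<and> (\<forall>i. zx $ i \<ge> (0::real)) \<and> (\<forall>j. zu $ j \<ge> (0::real)) \<longrightarrow>
         (\<exists>\<delta>0 > 0. \<exists>\<mu>. Kinf \<mu> \<and>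
            (\<forall>\<delta>. 0 < \<delta> \<and> \<delta> \<le> \<delta>0 \<longrightarrow>
              (\<forall>x0\<in>X0. \<forall>U0\<in>seqs N.
                 seq_norm N (\<lambda>k. U0 k -
                   (THE U. U \<in> seqs N \<and> (\<forall>V\<in>seqs N.
                      cost_N A B N (stage_cost \<delta> \<epsilon> Q R Cx dx wx Cu du wu) (P \<delta>) U x0
                      \<le> cost_N A B N (stage_cost \<delta> \<epsilon> Q R Cx dx wx Cu du wu) (P \<delta>) V x0)) k)
                 \<le> \<mu> \<delta> \<longrightarrow>
                 (\<forall>iT k. let (x, U) = closed_loop A B N (kf \<delta>) (Psio \<delta>) iT x0 U0 k in
                    (\<forall>i. (Cx *v x) $ i \<le> dx $ i + zx $ i) \<and>
                    (\<forall>j. (Cu *v U 0) $ j \<le> du $ j + zu $ j)))))"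
proof -
  have shift_descent: "cost_N A B N (stage_cost \<delta> \<epsilon> Q R Cx dx wx Cu du wu) (P \<delta>) (shiftop N (kf \<delta>) U x) (A *v x + B *v U 0)
      \<le> cost_N A B N (stage_cost \<delta> \<epsilon> Q R Cx dx wx Cu du wu) (P \<delta>) U x"
    if "0 < \<delta>" "\<forall>i. \<delta> \<le> dx $ i" "\<forall>j. \<delta> \<le> du $ j" "U \<in> seqs N" for \<delta> U x
    using kf_dec[OF that, of x]
      stage_cost_ge(4)[OF that(1-3) wx_nonneg wu_nonneg wx_center wu_center Q_psd R_pd eps_pos, of x "U 0"]
    by linarith
  have update_descent: "cost_N A B N (stage_cost \<delta> \<epsilon> Q R Cx dx wx Cu du wu) (P \<delta>) (Psio \<delta> U x) x
      \<le> cost_N A B N (stage_cost \<delta> \<epsilon> Q R Cx dx wx Cu du wu) (P \<delta>) U x"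
    if "0 < \<delta>" "\<forall>i. \<delta> \<le> dx $ i" "\<forall>j. \<delta> \<le> du $ j" "U \<in> seqs N" for \<delta> U x
    using Psio_dec[OF that, of x] gamma_nonneg[OF that, of x] by linarith
  interpret relaxed_barrier_mpc A B Cx dx wx Cu du wu N \<epsilon> Q R P kf Psio
    by (rule relaxed_barrier_mpc.intro; fact N_pos Xcomp Ucomp dx_pos du_pos eps_pos Q_psd R_pd wx_nonneg
        wu_nonneg wx_center wu_center P_ric shift_descent Psio_seqs update_descent)
  show ?thesis
    by (intro allI impI, elim conjE) (rule closed_loop_constraints_with_tolerance)
qed

end
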